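(* Let $f$ be a translation invariant quadratic form in $s$ variables with integer coefficients and $\mathrm{rank}_{\mathrm{off}}(f)\ge5$. Then for every prime $p$, $$\sigma_p^\ast\ge\frac{p^2}{\phi(p)^s}\sigma_p.$$
   Context: $f(\mathbf{x})=\mathbf{x}M\mathbf{x}^T$ with $M$ symmetric integer; translation invariant means $(1,\ldots,1)M=\mathbf{0}$; $\mathrm{rank}_{\mathrm{off}}(f)$ is the maximal rank of a submatrix $(a_{i_k,j_l})_{1\le k,l\le r}$ of $M$ with $\{i_1,\ldots,i_r\}\cap\{j_1,\ldots,j_r\}=\emptyset$. $e(z)=e^{2\pi iz}$, $\phi$ Euler's totient. $S(q,a)=\sum_{1\le c_1,\ldots,c_s\le q}e(af(\mathbf{c})/q)$, $S^\ast(q,a)$ is the same sum restricted to $\gcd(c_j,q)=1$ for all $j$, $B(q)=q^{-s}\sum_{a\le q,\gcd(a,q)=1}S(q,a)$, $B^\ast(q)=\phi(q)^{-s}\sum_{a\le q,\gcd(a,q)=1}S^\ast(q,a)$, $\sigma_p=\sum_{k\ge0}B(p^k)$, $\sigma_p^\ast=\sum_{k\ge0}B^\ast(p^k)$ (convergent series). Equivalently $\sigma_p^\ast=\lim_{k\to\infty}\frac{p^k}{\phi(p^k)^s}\#\{1\le\mathbf{x}\le p^k:\gcd(x_j,p)=1\ \forall j,\ f(\mathbf{x})\equiv0\ (\mathrm{mod}\ p^k)\}$ and $\sigma_p=\lim_{k\to\infty}p^{-k(s-1)}\#\{1\le\mathbf{x}\le p^k: f(\mathbf{x})\equiv0\ (\mathrm{mod}\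 p^k)\}$. *)

theory Defs
  imports "Jordan_Normal_Form.DL_Rank_Submatrix" "HOL-Number_Theory.Number_Theory"
begin

definition qform :: "nat \<Rightarrow> int mat \<Rightarrow> (nat \<Rightarrow> int) \<Rightarrow> int" where
  "qform s M x = (\<Sum>i<s. \<Sum>j<s. x i * M $$ (i, j) * x j)"

definition translation_invariant :: "nat \<Rightarrow> int mat \<Rightarrow> bool" where
  "translation_invariant s M \<longleftrightarrow> (\<forall>j<s. (\<Sum>i<s. M $$ (i, j)) = 0)"

definition rank_off :: "nat \<Rightarrow> int mat \<Rightarrow> nat" where
  "rank_off s M = Max {vec_space.rank (card I) (submatrix (map_mat rat_of_int M) I J) | I J.
      I \<subseteq> {..<s} \<and> J \<subseteq> {..<s} \<and> I \<inter> J = {} \<and> card I = card J}"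

definition count_sol :: "nat \<Rightarrow> int mat \<Rightarrow> nat \<Rightarrow> nat \<Rightarrow> nat" where
  "count_sol s M p k = card {x \<in> {..<s} \<rightarrow>\<^sub>E {1..int (p ^ k)}. [qform s M x = 0] (mod int (p ^ k))}"

definition count_sol_star :: "nat \<Rightarrow> int mat \<Rightarrow> nat \<Rightarrow> nat \<Rightarrow> nat" where
  "count_sol_star s M p k = card {x \<in> {..<s} \<rightarrow>\<^sub>E {1..int (p ^ k)}.
      (\<forall>j<s. coprime (x j) (int p)) \<and> [qform s M x = 0] (mod int (p ^ k))}"

definition sigma_p :: "nat \<Rightarrow> int mat \<Rightarrow> nat \<Rightarrow> real" where
  "sigma_p s M p = lim (\<lambda>k. real (count_sol s M p k) / real p ^ (k * (s - 1)))"

definition sigma_p_star :: "nat \<Rightarrow> int mat \<Rightarrow> nat \<Rightarrow> real" where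
  "sigma_p_star s M p = lim (\<lambda>k. real p ^ k / real (totient (p ^ k)) ^ s * real (count_sol_star s M p k))"

end

(* If f(y) = 0 mod p^k, then x = 1 + p y has all coordinates prime to p and, f being
   translation invariant, f(x) = p^2 f(y) = 0 mod p^(k+2).  Hence the number of such
   x modulo p^(k+2) is at least p^s times the number of solutions modulo p^k; normalising
   and letting k tend to infinity gives the inequality.

   Since sigma_p and sigma_p^* are defined as limits, the substance is that the normalised
   counts converge.  Expanding the congruence f(x) = 0 mod p^(k+1) in additive characters,
   the characters of order dividing p^k reproduce p^s times the count modulo p^k, and the
   remaining ones are Gauss-type sums S(p^(k+1), b) with p not dividing b.  Weyl differencing
   bounds |S|^2 by P^s times the number of h modulo P with M h = 0 mod P; an integral left
   inverse of r >= 4 independent columns of M (available because rank_off f >= 5) bounds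
   that number by O(P^(s-r)), so |S| = O(P^(s-2)) and the normalised counts change by
   O(p^-k) from one level to the next. *)
theory Submission
  imports Defs
begin

section \<open>Additive characters\<close>

definition e_frac :: "nat \<Rightarrow> int \<Rightarrow> complex" where
  "e_frac Q t = cis (2 * pi * of_int t / of_nat Q)"

lemma e_frac_add: "e_frac Q (a + b) = e_frac Q a * e_frac Q b"
  unfolding e_frac_def by (simp add: cis_mult distrib_left add_divide_distrib)

lemma e_frac_multiple: assumes "Q > 0" shows "e_frac Q (int Q * m) = 1"
proof -
  have "2 * pi * of_int (int Q * m) / of_nat Q = 2 * pi * of_int m"
    using assms by (simp add: field_simps)
  then show ?thesis unfolding e_frac_def by (simp add: cis_multiple_2pi)
qed

lemma e_frac_cong: assumes "Q > 0" "[a = b] (mod int Q)" shows "e_frac Q a = e_frac Q b"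
proof -
  obtain k where "b = a + int Q * k" using assms(2) cong_iff_lin by blast
  then show ?thesis using e_frac_add e_frac_multiple[OF assms(1)] by simp
qed

lemma norm_e_frac [simp]: "norm (e_frac Q t) = 1"
  unfolding e_frac_def by simp

lemma cnj_e_frac: "cnj (e_frac Q t) = e_frac Q (- t)"
  unfolding e_frac_def by (simp add: cis_cnj)

lemma e_frac_mult_mult: assumes "p > 0" shows "e_frac (p * Q) (int p * t) = e_frac Q t"
  unfolding e_frac_def using assms by (simp add: field_simps)

lemma e_frac_eq_1_imp_dvd: assumes "Q > 0" "e_frac Q t = 1" shows "int Q dvd t"
proof -
  have "cos (2 * pi * of_int t / of_nat Q) = 1"
    using assms(2) unfolding e_frac_def by (metis cis.sel(1) one_complex.sel(1))
  then obtain n :: int where "2 * pi * of_int t / of_nat Q = of_int n * 2 * pi"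
    using cos_one_2pi_int by blast
  then have "of_int t = (of_int (n * int Q) :: real)"
    using assms(1) pi_gt_zero by (simp add: field_simps)
  then show ?thesis by (metis dvd_triv_right of_int_eq_iff)
qed

lemma sum_e_frac:
  assumes "Q > 0"
  shows "(\<Sum>b<Q. e_frac Q (int b * t)) = (if int Q dvd t then of_nat Q else 0)"
proof (cases "int Q dvd t")
  case True
  then have "e_frac Q (int b * t) = 1" for b
    by (metis assms dvd_def e_frac_multiple mult.left_commute)
  then show ?thesis using True by simp
next
  case False
  let ?g = "\<lambda>b. e_frac Q (int b * t)"
  have "e_frac Q t * (\<Sum>b<Q. ?g b) = (\<Sum>b<Q. ?g (Suc b))"
    by (simp add: sum_distrib_left e_frac_add[symmetric] algebra_simps)
  also have "\<dots> = (\<Sum>b<Q. ?g b)"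
    using sum.lessThan_Suc_shift[of ?g Q] e_frac_multiple[OF assms, of t]
    by (simp add: e_frac_def)
  finally have "(e_frac Q t - 1) * (\<Sum>b<Q. ?g b) = 0" by (simp add: algebra_simps)
  moreover have "e_frac Q t \<noteq> 1" using e_frac_eq_1_imp_dvd[OF assms] False by blast
  ultimately show ?thesis using False by simp
qed

lemma card_dvd_eq_sum_e_frac:
  assumes "finite X" "Q > 0"
  shows "of_nat (card {x\<in>X. int Q dvd g x}) * of_nat Q = (\<Sum>b<Q. \<Sum>x\<in>X. e_frac Q (int b * g x))"
proof -
  have "(\<Sum>b<Q. \<Sum>x\<in>X. e_frac Q (int b * g x)) = (\<Sum>x\<in>X. \<Sum>b<Q. e_frac Q (int b * g x))"
    by (rule sum.swap)
  also have "\<dots> = (\<Sum>x\<in>X. if int Q dvd g x then of_nat Q else 0)"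
    using sum_e_frac[OF assms(2)] by simp
  also have "\<dots> = of_nat (card {x\<in>X. int Q dvd g x}) * of_nat Q"
    using assms(1) by (simp add: sum.If_cases Int_def)
  finally show ?thesis by simp
qed

definition box :: "nat \<Rightarrow> nat \<Rightarrow> (nat \<Rightarrow> int) set" where
  "box s Q = {..<s} \<rightarrow>\<^sub>E {0..<int Q}"

definition res_class :: "nat \<Rightarrow> nat \<Rightarrow> int \<Rightarrow> (nat \<Rightarrow> int) \<Rightarrow> (nat \<Rightarrow> int) set" where
  "res_class s Q m \<rho> = {x \<in> box s Q. \<forall>j<s. [x j = \<rho> j] (mod m)}"

definition shift :: "nat \<Rightarrow> nat \<Rightarrow> (nat \<Rightarrow> int) \<Rightarrow> (nat \<Rightarrow> int) \<Rightarrow> nat \<Rightarrow> int" where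
  "shift s Q h x = restrict (\<lambda>j. (x j + h j) mod int Q) {..<s}"

lemma finite_box [simp]: "finite (box s Q)"
  unfolding box_def by (simp add: finite_PiE)

lemma card_box: "card (box s Q) = Q ^ s"
  unfolding box_def by (simp add: card_PiE)

lemma box_memD: "x \<in> box s Q \<Longrightarrow> j < s \<Longrightarrow> 0 \<le> x j \<and> x j < int Q"
  unfolding box_def using PiE_mem[of x "{..<s}" "\<lambda>_. {0..<int Q}" j] by simp

lemma restrict_in_box:
  "(\<And>j. j < s \<Longrightarrow> 0 \<le> f j \<and> f j < int Q) \<Longrightarrow> restrict f {..<s} \<in> box s Q"
  unfolding box_def by (simp add: restrict_PiE_iff)

lemma box_eqI:
  assumes "x \<in> box s Q" "y \<in> box s Q'" "\<And>j. j < s \<Longrightarrow> x j = y j"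
  shows "x = y"
proof
  fix j show "x j = y j"
    using assms PiE_arb[of x "{..<s}" _ j] PiE_arb[of y "{..<s}" _ j]
    unfolding box_def by (cases "j < s") auto
qed

lemma finite_res_class [simp]: "finite (res_class s Q m \<rho>)"
  unfolding res_class_def by simp

lemma card_res_class_le: "card (res_class s Q m \<rho>) \<le> Q ^ s"
proof -
  have "card (res_class s Q m \<rho>) \<le> card (box s Q)"
    by (rule card_mono) (auto simp: res_class_def)
  then show ?thesis by (simp add: card_box)
qed

lemma shift_apply [simp]: "j < s \<Longrightarrow> shift s Q h x j = (x j + h j) mod int Q"
  unfolding shift_def by simp

lemma shift_in_box: "Q > 0 \<Longrightarrow> shift s Q h x \<in> box s Q"
  unfolding shift_def by (intro restrict_in_box) simp

lemma shift_in_res_class: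
  assumes "Q > 0" "m dvd int Q" "\<And>j. j < s \<Longrightarrow> m dvd h j" "x \<in> res_class s Q m \<rho>"
  shows "shift s Q h x \<in> res_class s Q m \<rho>"
proof -
  have "[shift s Q h x j = \<rho> j] (mod m)" if "j < s" for j
  proof -
    have "[shift s Q h x j = x j + h j] (mod m)"
      using that assms(2) by (simp add: cong_def mod_mod_cancel)
    also have "[x j + h j = \<rho> j + 0] (mod m)"
      using assms(3,4) that unfolding res_class_def by (intro cong_add) (auto simp: cong_0_iff)
    finally show ?thesis by simp
  qed
  then show ?thesis using shift_in_box[OF assms(1)] unfolding res_class_def by simp
qed

lemma shift_shift_neg:
  assumes "x \<in> box s Q" "Q > 0"
  shows "shift s Q (\<lambda>j. - h j) (shift s Q h x) = x"
proof (rule box_eqI[OF shift_in_box[OF assms(2)] assms(1)])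
  fix j assume j: "j < s"
  have "((x j + h j) mod int Q + - h j) mod int Q = x j mod int Q"
    by (metis add_diff_cancel_right' diff_conv_add_uminus mod_diff_left_eq)
  then show "shift s Q (\<lambda>j. - h j) (shift s Q h x) j = x j"
    using box_memD[OF assms(1) j] j by simp
qed

lemma bij_betw_shift_res_class:
  assumes "Q > 0" "m dvd int Q" "\<And>j. j < s \<Longrightarrow> m dvd h j"
  shows "bij_betw (shift s Q h) (res_class s Q m \<rho>) (res_class s Q m \<rho>)"
proof (rule bij_betw_byWitness[where f' = "shift s Q (\<lambda>j. - h j)"])
  show "\<forall>x\<in>res_class s Q m \<rho>. shift s Q (\<lambda>j. - h j) (shift s Q h x) = x"
    using shift_shift_neg assms(1) unfolding res_class_def by blast
  show "\<forall>x\<in>res_class s Q m \<rho>. shift s Q h (shift s Q (\<lambda>j. - h j) x) = x"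
    using shift_shift_neg[OF _ assms(1), of _ s "\<lambda>j. - h j"] unfolding res_class_def by simp
  show "shift s Q h ` res_class s Q m \<rho> \<subseteq> res_class s Q m \<rho>"
    using shift_in_res_class[of Q m s h, OF assms] by blast
  show "shift s Q (\<lambda>j. - h j) ` res_class s Q m \<rho> \<subseteq> res_class s Q m \<rho>"
    using shift_in_res_class[OF assms(1,2), of s "\<lambda>j. - h j"] assms(3) by auto
qed

lemma bij_betw_shift_res_class_zero:
  assumes "Q > 0" "m dvd int Q" "y \<in> res_class s Q m \<rho>"
  shows "bij_betw (\<lambda>h. shift s Q h y) (res_class s Q m (\<lambda>_. 0)) (res_class s Q m \<rho>)"
proof (rule bij_betw_byWitness[where f' = "shift s Q (\<lambda>j. - y j)"])
  have y: "y \<in> box s Q" using assms(3) unfolding res_class_def by simp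
  show "\<forall>h\<in>res_class s Q m (\<lambda>_. 0). shift s Q (\<lambda>j. - y j) (shift s Q h y) = h"
  proof
    fix h assume "h \<in> res_class s Q m (\<lambda>_. 0)"
    then have h: "h \<in> box s Q" unfolding res_class_def by simp
    show "shift s Q (\<lambda>j. - y j) (shift s Q h y) = h"
    proof (rule box_eqI[OF shift_in_box[OF assms(1)] h])
      fix j assume j: "j < s"
      have "((y j + h j) mod int Q - y j) mod int Q = h j mod int Q"
        by (metis add_diff_cancel_left' mod_diff_left_eq)
      then show "shift s Q (\<lambda>j. - y j) (shift s Q h y) j = h j"
        using box_memD[OF h j] j by simp
    qed
  qed
  show "\<forall>x\<in>res_class s Q m \<rho>. shift s Q (shift s Q (\<lambda>j. - y j) x) y = x"
  proof
    fix x assume "x \<in> res_class s Q m \<rho>"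
    then have x: "x \<in> box s Q" unfolding res_class_def by simp
    show "shift s Q (shift s Q (\<lambda>j. - y j) x) y = x"
    proof (rule box_eqI[OF shift_in_box[OF assms(1)] x])
      fix j assume j: "j < s"
      have "(y j + (x j + - y j) mod int Q) mod int Q = x j mod int Q"
        by (metis add.commute add_diff_cancel_left' diff_conv_add_uminus mod_add_right_eq)
      then show "shift s Q (shift s Q (\<lambda>j. - y j) x) y j = x j"
        using box_memD[OF x j] j by simp
    qed
  qed
  show "(\<lambda>h. shift s Q h y) ` res_class s Q m (\<lambda>_. 0) \<subseteq> res_class s Q m \<rho>"
    using shift_in_res_class[OF assms(1,2) _ assms(3)] unfolding res_class_def
    by (auto simp: cong_0_iff)
  show "shift s Q (\<lambda>j. - y j) ` res_class s Q m \<rho> \<subseteq> res_class s Q m (\<lambda>_. 0)"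
  proof clarify
    fix x assume x: "x \<in> res_class s Q m \<rho>"
    have "[shift s Q (\<lambda>j. - y j) x j = 0] (mod m)" if j: "j < s" for j
    proof -
      have "[shift s Q (\<lambda>j. - y j) x j = x j - y j] (mod m)"
        using j assms(2) by (simp add: cong_def mod_mod_cancel)
      also have "[x j - y j = \<rho> j - \<rho> j] (mod m)"
        using x assms(3) j unfolding res_class_def by (intro cong_diff) auto
      finally show ?thesis by simp
    qed
    then show "shift s Q (\<lambda>j. - y j) x \<in> res_class s Q m (\<lambda>_. 0)"
      using shift_in_box[OF assms(1)] unfolding res_class_def by simp
  qed
qed

section \<open>Weyl differencing\<close>

definition mat_app :: "nat \<Rightarrow> int mat \<Rightarrow> (nat \<Rightarrow> int) \<Rightarrow> nat \<Rightarrow> int" where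
  "mat_app s M h i = (\<Sum>j<s. M $$ (i, j) * h j)"

lemma qform_cong:
  assumes "\<And>j. j < s \<Longrightarrow> [x j = y j] (mod m)"
  shows "[qform s M x = qform s M y] (mod m)"
  unfolding qform_def by (intro cong_sum cong_mult cong_refl) (use assms in auto)

lemma qform_restrict [simp]: "qform s M (restrict x {..<s}) = qform s M x"
  unfolding qform_def by (intro sum.cong) auto

lemma qform_add:
  assumes symm: "\<And>i j. i < s \<Longrightarrow> j < s \<Longrightarrow> M $$ (i, j) = M $$ (j, i)"
  shows "qform s M (\<lambda>j. y j + h j) = qform s M y + 2 * (\<Sum>i<s. y i * mat_app s M h i) + qform s M h"
proof -
  define A where "A = (\<Sum>i<s. \<Sum>j<s. y i * M $$ (i, j) * h j)"
  define B where "B = (\<Sum>i<s. \<Sum>j<s. h i * M $$ (i, j) * y j)"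
  have "qform s M (\<lambda>j. y j + h j) = (\<Sum>i<s. \<Sum>j<s. y i * M $$ (i, j) * y j + y i * M $$ (i, j) * h j
      + h i * M $$ (i, j) * y j + h i * M $$ (i, j) * h j)"
    unfolding qform_def by (intro sum.cong refl) (simp add: algebra_simps)
  also have "\<dots> = qform s M y + A + B + qform s M h"
    unfolding qform_def A_def B_def by (simp only: sum.distrib)
  finally have split: "qform s M (\<lambda>j. y j + h j) = qform s M y + A + B + qform s M h" .
  have "B = (\<Sum>j<s. \<Sum>i<s. h i * M $$ (i, j) * y j)"
    unfolding B_def by (rule sum.swap)
  also have "\<dots> = A"
  proof -
    have "h i * M $$ (i, j) * y j = y j * M $$ (j, i) * h i" if "i < s" "j < s" for i j
      using symm[OF that] by simp
    then show ?thesis unfolding A_def by (intro sum.cong refl) simp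
  qed
  finally have "B = A" .
  moreover have "A = (\<Sum>i<s. y i * mat_app s M h i)"
    unfolding mat_app_def A_def by (simp add: sum_distrib_left mult.assoc)
  ultimately show ?thesis using split by simp
qed

lemma qform_one_plus_mult:
  assumes symm: "\<And>i j. i < s \<Longrightarrow> j < s \<Longrightarrow> M $$ (i, j) = M $$ (j, i)"
    and "translation_invariant s M"
  shows "qform s M (\<lambda>j. 1 + c * y j) = c ^ 2 * qform s M y"
proof -
  have col: "(\<Sum>i<s. M $$ (i, j)) = 0" if "j < s" for j
    using assms(2) that unfolding translation_invariant_def by simp
  have "qform s M (\<lambda>_. 1) = (\<Sum>i<s. \<Sum>j<s. M $$ (i, j))"
    unfolding qform_def by simp
  also have "\<dots> = (\<Sum>j<s. \<Sum>i<s. M $$ (i, j))" by (rule sum.swap)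
  also have "\<dots> = 0" using col by simp
  finally have const: "qform s M (\<lambda>_. 1) = 0" .
  have "(\<Sum>i<s. 1 * mat_app s M (\<lambda>j. c * y j) i) = (\<Sum>i<s. \<Sum>j<s. M $$ (i, j) * (c * y j))"
    unfolding mat_app_def by simp
  also have "\<dots> = (\<Sum>j<s. \<Sum>i<s. M $$ (i, j) * (c * y j))" by (rule sum.swap)
  also have "\<dots> = (\<Sum>j<s. (\<Sum>i<s. M $$ (i, j)) * (c * y j))" by (simp add: sum_distrib_right)
  also have "\<dots> = 0" using col by simp
  finally have cross: "(\<Sum>i<s. 1 * mat_app s M (\<lambda>j. c * y j) i) = 0" .
  have "qform s M (\<lambda>j. c * y j) = c ^ 2 * qform s M y"
    unfolding qform_def by (simp add: sum_distrib_left power2_eq_square algebra_simps)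
  then show ?thesis
    using qform_add[OF symm, where y = "\<lambda>_. 1" and h = "\<lambda>j. c * y j"] const cross by simp
qed

lemma sum_e_frac_linear_res_class_eq_0:
  assumes Q: "Q > 0" and m: "m dvd int Q" and i: "i < s" and nd: "\<not> int Q dvd c * m * v i"
  shows "(\<Sum>y\<in>res_class s Q m \<rho>. e_frac Q (c * (\<Sum>j<s. y j * v j))) = 0"
proof -
  define \<delta> where "\<delta> = (\<lambda>j. if j = i then m else 0)"
  let ?X = "res_class s Q m \<rho>"
  let ?F = "\<lambda>y. e_frac Q (c * (\<Sum>j<s. y j * v j))"
  have bij: "bij_betw (shift s Q \<delta>) ?X ?X"
    by (rule bij_betw_shift_res_class[OF Q m]) (simp add: \<delta>_def)
  have "?F (shift s Q \<delta> y) = ?F y * e_frac Q (c * m * v i)" for y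
  proof -
    have "[(\<Sum>j<s. shift s Q \<delta> y j * v j) = (\<Sum>j<s. (y j + \<delta> j) * v j)] (mod int Q)"
      by (intro cong_sum cong_mult cong_refl) (simp add: cong_def)
    also have "(\<Sum>j<s. (y j + \<delta> j) * v j) = (\<Sum>j<s. y j * v j) + m * v i"
    proof -
      have "(\<Sum>j<s. \<delta> j * v j) = (\<Sum>j<s. if j = i then m * v i else 0)"
        by (intro sum.cong) (auto simp: \<delta>_def)
      then show ?thesis using i by (simp add: distrib_right sum.distrib)
    qed
    finally have "[c * (\<Sum>j<s. shift s Q \<delta> y j * v j) = c * (\<Sum>j<s. y j * v j) + c * m * v i] (mod int Q)"
      by (metis (no_types, lifting) cong_scalar_left distrib_left mult.assoc)
    then show ?thesis by (simp add: e_frac_cong[OF Q] e_frac_add)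
  qed
  then have "(\<Sum>y\<in>?X. ?F y) = (\<Sum>y\<in>?X. ?F y) * e_frac Q (c * m * v i)"
    using sum.reindex_bij_betw[OF bij, of ?F] by (simp add: sum_distrib_right)
  then have "(\<Sum>y\<in>?X. ?F y) * (e_frac Q (c * m * v i) - 1) = 0" by (simp add: algebra_simps)
  moreover have "e_frac Q (c * m * v i) \<noteq> 1" using e_frac_eq_1_imp_dvd[OF Q] nd by blast
  ultimately show ?thesis by simp
qed

lemma e_frac_qform_shift:
  assumes Q: "Q > 0" and symm: "\<And>i j. i < s \<Longrightarrow> j < s \<Longrightarrow> M $$ (i, j) = M $$ (j, i)"
  shows "e_frac Q (b * qform s M (shift s Q h y)) * cnj (e_frac Q (b * qform s M y))
    = e_frac Q (b * qform s M h) * e_frac Q (2 * b * (\<Sum>i<s. y i * mat_app s M h i))"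
proof -
  have "[qform s M (shift s Q h y) = qform s M (\<lambda>j. y j + h j)] (mod int Q)"
    by (rule qform_cong) (simp add: cong_def)
  then have "[qform s M (shift s Q h y)
      = qform s M y + 2 * (\<Sum>i<s. y i * mat_app s M h i) + qform s M h] (mod int Q)"
    by (simp only: qform_add[OF symm])
  then have "[b * qform s M (shift s Q h y) + - (b * qform s M y)
      = b * (qform s M y + 2 * (\<Sum>i<s. y i * mat_app s M h i) + qform s M h) + - (b * qform s M y)]
      (mod int Q)"
    by (intro cong_add cong_scalar_left cong_refl)
  also have "b * (qform s M y + 2 * (\<Sum>i<s. y i * mat_app s M h i) + qform s M h) + - (b * qform s M y)
      = b * qform s M h + 2 * b * (\<Sum>i<s. y i * mat_app s M h i)"
    by (simp add: algebra_simps)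
  finally show ?thesis
    unfolding cnj_e_frac e_frac_add[symmetric] by (rule e_frac_cong[OF Q])
qed

text \<open>Weyl differencing: substituting x = y + h turns |S|^2 into a double sum whose inner sum
  over y is linear in y.\<close>
lemma weyl_differencing_identity:
  fixes b :: int and \<rho> :: "nat \<Rightarrow> int"
  assumes Q: "Q > 0" and m: "m dvd int Q"
    and symm: "\<And>i j. i < s \<Longrightarrow> j < s \<Longrightarrow> M $$ (i, j) = M $$ (j, i)"
  shows "(\<Sum>x\<in>res_class s Q m \<rho>. e_frac Q (b * qform s M x)) *
      cnj (\<Sum>x\<in>res_class s Q m \<rho>. e_frac Q (b * qform s M x)) = (\<Sum>h\<in>res_class s Q m (\<lambda>_. 0). e_frac Q (b * qform s M h) *
           (\<Sum>y\<in>res_class s Q m \<rho>. e_frac Q (2 * b * (\<Sum>i<s. y i * mat_app s M h i))))"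
proof -
  let ?X = "res_class s Q m \<rho>"
  let ?H = "res_class s Q m (\<lambda>_. 0)"
  let ?F = "\<lambda>x. e_frac Q (b * qform s M x)"
  let ?G = "\<lambda>h y. e_frac Q (b * qform s M h) * e_frac Q (2 * b * (\<Sum>i<s. y i * mat_app s M h i))"
  have inner: "(\<Sum>x\<in>?X. ?F x * cnj (?F y)) = (\<Sum>h\<in>?H. ?G h y)" if y: "y \<in> ?X" for y
  proof -
    have "(\<Sum>x\<in>?X. ?F x * cnj (?F y)) = (\<Sum>h\<in>?H. ?F (shift s Q h y) * cnj (?F y))"
      using sum.reindex_bij_betw[OF bij_betw_shift_res_class_zero[OF Q m y],
          of "\<lambda>x. ?F x * cnj (?F y)"] by simp
    also have "\<dots> = (\<Sum>h\<in>?H. ?G h y)"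
      by (intro sum.cong refl e_frac_qform_shift[OF Q symm])
    finally show ?thesis .
  qed
  have "(\<Sum>x\<in>?X. ?F x) * cnj (\<Sum>x\<in>?X. ?F x) = (\<Sum>x\<in>?X. \<Sum>y\<in>?X. ?F x * cnj (?F y))"
    by (simp add: sum_product)
  also have "\<dots> = (\<Sum>y\<in>?X. \<Sum>x\<in>?X. ?F x * cnj (?F y))"
    by (rule sum.swap)
  also have "\<dots> = (\<Sum>y\<in>?X. \<Sum>h\<in>?H. ?G h y)"
    using inner by simp
  also have "\<dots> = (\<Sum>h\<in>?H. \<Sum>y\<in>?X. ?G h y)"
    by (rule sum.swap)
  finally show ?thesis by (simp add: sum_distrib_left)
qed

lemma weyl_differencing:
  assumes Q: "Q > 0" and m: "m dvd int Q" and b: "coprime b (int Q)"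
    and symm: "\<And>i j. i < s \<Longrightarrow> j < s \<Longrightarrow> M $$ (i, j) = M $$ (j, i)"
  shows "(cmod (\<Sum>x\<in>res_class s Q m \<rho>. e_frac Q (b * qform s M x)))\<^sup>2
     \<le> real (card (res_class s Q m \<rho>)) * real (card {h\<in>box s Q. \<forall>i<s. int Q dvd 2 * m * mat_app s M h i})"
proof -
  let ?X = "res_class s Q m \<rho>"
  let ?H = "res_class s Q m (\<lambda>_. 0)"
  let ?S = "\<Sum>x\<in>?X. e_frac Q (b * qform s M x)"
  let ?P = "\<lambda>h. \<forall>i<s. int Q dvd 2 * m * mat_app s M h i"
  let ?L = "\<lambda>h. \<Sum>y\<in>?X. e_frac Q (2 * b * (\<Sum>i<s. y i * mat_app s M h i))"
  have bound: "cmod (?L h) \<le> (if ?P h then real (card ?X) else 0)" for h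
  proof (cases "?P h")
    case True
    have "cmod (?L h) \<le> (\<Sum>y\<in>?X. cmod (e_frac Q (2 * b * (\<Sum>i<s. y i * mat_app s M h i))))"
      by (rule norm_sum)
    then show ?thesis using True by simp
  next
    case False
    then obtain i where i: "i < s" and nd: "\<not> int Q dvd 2 * m * mat_app s M h i" by blast
    have "\<not> int Q dvd (2 * b) * m * mat_app s M h i"
      using nd b by (metis coprime_commute coprime_dvd_mult_right_iff mult.assoc mult.left_commute)
    then show ?thesis using False
      by (simp add: sum_e_frac_linear_res_class_eq_0[OF Q m i])
  qed
  have "?S * cnj ?S = (\<Sum>h\<in>?H. e_frac Q (b * qform s M h) * ?L h)"
    by (rule weyl_differencing_identity[OF Q m symm])
  then have "(cmod ?S)\<^sup>2 = cmod (\<Sum>h\<in>?H. e_frac Q (b * qform s M h) * ?L h)"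
    by (metis complex_mod_mult_cnj)
  also have "\<dots> \<le> (\<Sum>h\<in>?H. cmod (e_frac Q (b * qform s M h) * ?L h))"
    by (rule norm_sum)
  also have "\<dots> \<le> (\<Sum>h\<in>?H. if ?P h then real (card ?X) else 0)"
    by (intro sum_mono) (simp add: norm_mult bound)
  also have "\<dots> = real (card ?X) * real (card {h\<in>?H. ?P h})"
    by (simp add: sum.If_cases Int_def)
  also have "\<dots> \<le> real (card ?X) * real (card {h\<in>box s Q. ?P h})"
    by (intro mult_left_mono of_nat_mono card_mono) (auto simp: res_class_def)
  finally show ?thesis .
qed

section \<open>Counting solutions of linear congruences\<close>

lemma card_linear_congruence_le:
  assumes Q: "Q > 0" and a: "a \<noteq> 0"
  shows "card {t \<in> {0..<int Q}. int Q dvd a * t + e} \<le> 2 * nat \<bar>a\<bar>"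
proof (cases "{t \<in> {0..<int Q}. int Q dvd a * t + e} = {}")
  case False
  let ?T = "{t \<in> {0..<int Q}. int Q dvd a * t + e}"
  obtain t0 where t0: "t0 \<in> ?T" using False by blast
  define \<phi> where "\<phi> = (\<lambda>t. (a * (t - t0)) div int Q)"
  have eq: "a * (t - t0) = int Q * \<phi> t" if "t \<in> ?T" for t
  proof -
    have "int Q dvd (a * t + e) - (a * t0 + e)" using that t0 by (intro dvd_diff) auto
    then show ?thesis unfolding \<phi>_def by (simp add: algebra_simps)
  qed
  have "inj_on \<phi> ?T"
  proof
    fix t t' assume "t \<in> ?T" "t' \<in> ?T" "\<phi> t = \<phi> t'"
    then have "a * (t - t0) = a * (t' - t0)" using eq by simp
    then show "t = t'" using a by simp
  qed
  moreover have "\<phi> ` ?T \<subseteq> {-\<bar>a\<bar><..<\<bar>a\<bar>}"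
  proof (rule image_subsetI)
    fix t assume t: "t \<in> ?T"
    have "int Q * \<bar>\<phi> t\<bar> = \<bar>a\<bar> * \<bar>t - t0\<bar>" using arg_cong[OF eq[OF t], of abs] by (simp add: abs_mult)
    also have "\<dots> < \<bar>a\<bar> * int Q" using t t0 a by (intro mult_strict_left_mono) auto
    finally have "\<bar>\<phi> t\<bar> < \<bar>a\<bar>" using Q by (simp add: mult.commute[of "\<bar>a\<bar>"])
    then show "\<phi> t \<in> {-\<bar>a\<bar><..<\<bar>a\<bar>}" by auto
  qed
  ultimately have "card ?T \<le> card {-\<bar>a\<bar><..<\<bar>a\<bar>}"
    by (metis card_image card_mono finite_greaterThanLessThan_int)
  then show ?thesis by simp
qed (simp only: card.empty le0)

lemma inj_on_box_split_coordinates: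
  "inj_on (\<lambda>h. (restrict h ({..<s} - cs ` {..<r}), restrict (\<lambda>k. h (cs k)) {..<r})) (box s Q)"
proof
  fix h h' assume h: "h \<in> box s Q" and h': "h' \<in> box s Q"
    and "(restrict h ({..<s} - cs ` {..<r}), restrict (\<lambda>k. h (cs k)) {..<r})
      = (restrict h' ({..<s} - cs ` {..<r}), restrict (\<lambda>k. h' (cs k)) {..<r})"
  then have eR: "restrict h ({..<s} - cs ` {..<r}) = restrict h' ({..<s} - cs ` {..<r})"
    and eC: "restrict (\<lambda>k. h (cs k)) {..<r} = restrict (\<lambda>k. h' (cs k)) {..<r}"
    by simp_all
  show "h = h'"
  proof (rule box_eqI[OF h h'])
    fix j assume j: "j < s"
    show "h j = h' j"
    proof (cases "j \<in> cs ` {..<r}")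
      case True
      then obtain k where k: "k < r" and jk: "j = cs k" by auto
      show ?thesis using fun_cong[OF eC, of k] k unfolding jk by simp
    next
      case False
      then show ?thesis using fun_cong[OF eR, of j] j by simp
    qed
  qed
qed

lemma card_box_subset_by_coordinates:
  fixes cs :: "nat \<Rightarrow> nat" and T :: "(nat \<Rightarrow> int) \<Rightarrow> int set"
  assumes Y: "Y \<subseteq> box s Q" and inj: "inj_on cs {..<r}" and cs: "cs ` {..<r} \<subseteq> {..<s}"
    and T: "\<And>h k. h \<in> Y \<Longrightarrow> k < r \<Longrightarrow> h (cs k) \<in> T (restrict h ({..<s} - cs ` {..<r}))"
    and fin: "\<And>g. finite (T g)" and card: "\<And>g. card (T g) \<le> B"
  shows "card Y \<le> B ^ r * Q ^ (s - r)"
proof -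
  define R where "R = {..<s} - cs ` {..<r}"
  define \<Phi> where "\<Phi> = (\<lambda>h :: nat \<Rightarrow> int. (restrict h R, restrict (\<lambda>k. h (cs k)) {..<r}))"
  define Z where "Z = Sigma (R \<rightarrow>\<^sub>E {0..<int Q}) (\<lambda>g. {..<r} \<rightarrow>\<^sub>E T g)"
  have "inj_on \<Phi> Y"
    unfolding \<Phi>_def R_def by (rule inj_on_subset[OF inj_on_box_split_coordinates Y])
  moreover have "\<Phi> ` Y \<subseteq> Z"
  proof (rule image_subsetI)
    fix h assume h: "h \<in> Y"
    have "restrict h R \<in> R \<rightarrow>\<^sub>E {0..<int Q}"
      using box_memD[of h s Q] h Y unfolding R_def by (auto simp: restrict_PiE_iff)
    moreover have "restrict (\<lambda>k. h (cs k)) {..<r} \<in> {..<r} \<rightarrow>\<^sub>E T (restrict h R)"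
      using T[OF h] unfolding R_def by (simp add: restrict_PiE_iff)
    ultimately show "\<Phi> h \<in> Z" unfolding \<Phi>_def Z_def by simp
  qed
  moreover have finA: "finite (R \<rightarrow>\<^sub>E {0..<int Q})" unfolding R_def by (simp add: finite_PiE)
  moreover have finB: "\<forall>g\<in>R \<rightarrow>\<^sub>E {0..<int Q}. finite ({..<r} \<rightarrow>\<^sub>E T g)"
    using fin by (simp add: finite_PiE)
  ultimately have "card Y \<le> card Z"
    unfolding Z_def by (metis card_image card_mono finite_SigmaI)
  also have "card Z = (\<Sum>g\<in>R \<rightarrow>\<^sub>E {0..<int Q}. card (T g) ^ r)"
    unfolding Z_def card_SigmaI[OF finA finB] by (simp add: card_PiE)
  also have "\<dots> \<le> (\<Sum>g\<in>R \<rightarrow>\<^sub>E {0..<int Q}. B ^ r)"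
    by (intro sum_mono power_mono card) simp
  also have "\<dots> = Q ^ card R * B ^ r"
    unfolding R_def by (simp add: card_PiE)
  also have "card R = s - r"
  proof -
    have "card (cs ` {..<r}) = r" using card_image[OF inj] by simp
    then show ?thesis unfolding R_def using card_Diff_subset[OF _ cs] by simp
  qed
  finally show ?thesis by (simp add: mult.commute)
qed

definition scaled_left_inverse ::
  "nat \<Rightarrow> int mat \<Rightarrow> nat \<Rightarrow> (nat \<Rightarrow> nat) \<Rightarrow> (nat \<Rightarrow> nat \<Rightarrow> int) \<Rightarrow> int \<Rightarrow> bool" where
  "scaled_left_inverse s M r cs w D \<longleftrightarrow> D \<noteq> 0 \<and> (\<forall>k<r. cs k < s) \<and>
     (\<forall>k<r. \<forall>k'<r. (\<Sum>i<s. w k i * M $$ (i, cs k')) = (if k = k' then D else 0))"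

lemma scaled_left_inverse_inj:
  assumes "scaled_left_inverse s M r cs w D"
  shows "inj_on cs {..<r}"
proof
  fix k k' assume k: "k \<in> {..<r}" and k': "k' \<in> {..<r}" and e: "cs k = cs k'"
  have D: "D \<noteq> 0"
    and W: "\<forall>k<r. \<forall>k'<r. (\<Sum>i<s. w k i * M $$ (i, cs k')) = (if k = k' then D else 0)"
    using assms unfolding scaled_left_inverse_def by auto
  have "(\<Sum>i<s. w k i * M $$ (i, cs k')) = D" using W k unfolding e[symmetric] by simp
  moreover have "(\<Sum>i<s. w k i * M $$ (i, cs k')) = (if k = k' then D else 0)" using W k k' by simp
  ultimately show "k = k'" using D by (simp split: if_splits)
qed

lemma scaled_left_inverse_le:
  assumes "scaled_left_inverse s M r cs w D"
  shows "r \<le> s"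
proof -
  have "cs ` {..<r} \<subseteq> {..<s}" using assms unfolding scaled_left_inverse_def by auto
  then have "card (cs ` {..<r}) \<le> card {..<s}" by (rule card_mono[rotated]) simp
  then show ?thesis using card_image[OF scaled_left_inverse_inj[OF assms]] by simp
qed

text \<open>Applying w to the congruences expresses each coordinate h (cs k) through the coordinates
  outside cs, up to the factor c D.\<close>
lemma scaled_left_inverse_dvd:
  assumes inv: "scaled_left_inverse s M r cs w D" and k: "k < r"
    and h: "\<forall>i<s. int Q dvd c * mat_app s M h i"
  shows "int Q dvd (c * D) * h (cs k) + c * (\<Sum>j\<in>{..<s} - cs ` {..<r}. (\<Sum>i<s. w k i * M $$ (i, j)) * h j)"
proof -
  define Wk where "Wk = (\<lambda>j. \<Sum>i<s. w k i * M $$ (i, j))"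
  have cs: "cs ` {..<r} \<subseteq> {..<s}"
    and W: "\<And>k'. k' < r \<Longrightarrow> Wk (cs k') = (if k = k' then D else 0)"
    using inv k unfolding scaled_left_inverse_def Wk_def by auto
  have "int Q dvd (\<Sum>i<s. w k i * (c * mat_app s M h i))"
    by (rule dvd_sum) (use h in \<open>simp add: dvd_mult\<close>)
  also have "(\<Sum>i<s. w k i * (c * mat_app s M h i)) = c * (\<Sum>i<s. \<Sum>j<s. w k i * M $$ (i, j) * h j)"
    unfolding mat_app_def by (simp add: sum_distrib_left algebra_simps)
  also have "(\<Sum>i<s. \<Sum>j<s. w k i * M $$ (i, j) * h j) = (\<Sum>j<s. \<Sum>i<s. w k i * M $$ (i, j) * h j)"
    by (rule sum.swap)
  also have "\<dots> = (\<Sum>j<s. Wk j * h j)"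
    unfolding Wk_def by (simp add: sum_distrib_right)
  also have "\<dots> = (\<Sum>j\<in>{..<s} - cs ` {..<r}. Wk j * h j) + (\<Sum>j\<in>cs ` {..<r}. Wk j * h j)"
    by (rule sum.subset_diff[OF cs]) simp
  also have "(\<Sum>j\<in>cs ` {..<r}. Wk j * h j) = (\<Sum>k'<r. Wk (cs k') * h (cs k'))"
    by (rule sum.reindex[OF scaled_left_inverse_inj[OF inv], unfolded comp_def])
  also have "\<dots> = (\<Sum>k'<r. if k = k' then D * h (cs k') else 0)"
    by (intro sum.cong refl) (simp add: W)
  also have "\<dots> = D * h (cs k)" using k by simp
  finally show ?thesis unfolding Wk_def by (simp add: algebra_simps)
qed

lemma card_kernel_mod_le:
  assumes Q: "Q > 0" and c: "c \<noteq> 0" and inv: "scaled_left_inverse s M r cs w D"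
  shows "card {h\<in>box s Q. \<forall>i<s. int Q dvd c * mat_app s M h i} \<le> (2 * r * nat \<bar>c * D\<bar>) ^ r * Q ^ (s - r)"
proof -
  define E where "E = (\<lambda>k (g :: nat \<Rightarrow> int). \<Sum>j\<in>{..<s} - cs ` {..<r}. (\<Sum>i<s. w k i * M $$ (i, j)) * g j)"
  define T where "T = (\<lambda>g. \<Union>k<r. {t \<in> {0..<int Q}. int Q dvd (c * D) * t + c * E k g})"
  have D: "D \<noteq> 0" and cs: "cs ` {..<r} \<subseteq> {..<s}"
    using inv unfolding scaled_left_inverse_def by auto
  have mem: "h (cs k) \<in> T (restrict h ({..<s} - cs ` {..<r}))"
    if h: "h \<in> {h\<in>box s Q. \<forall>i<s. int Q dvd c * mat_app s M h i}" and k: "k < r" for h k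
  proof -
    have "E k (restrict h ({..<s} - cs ` {..<r})) = E k h" unfolding E_def by (intro sum.cong) auto
    then have "int Q dvd (c * D) * h (cs k) + c * E k (restrict h ({..<s} - cs ` {..<r}))"
      using scaled_left_inverse_dvd[OF inv k] h unfolding E_def by simp
    moreover have "h (cs k) \<in> {0..<int Q}" using box_memD[of h s Q "cs k"] h cs k by auto
    ultimately show ?thesis unfolding T_def using k by blast
  qed
  have fin: "finite (T g)" for g
    unfolding T_def by (intro finite_UN_I) (auto intro: finite_subset[of _ "{0..<int Q}"])
  have card: "card (T g) \<le> 2 * r * nat \<bar>c * D\<bar>" for g
  proof -
    have "card (T g) \<le> (\<Sum>k<r. card {t \<in> {0..<int Q}. int Q dvd (c * D) * t + c * E k g})"
      unfolding T_def by (rule card_UN_le) simp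
    also have "\<dots> \<le> (\<Sum>k<r. 2 * nat \<bar>c * D\<bar>)"
      by (intro sum_mono card_linear_congruence_le Q) (use c D in simp)
    finally show ?thesis by simp
  qed
  show ?thesis
    by (rule card_box_subset_by_coordinates[OF _ scaled_left_inverse_inj[OF inv] cs mem fin card]) blast
qed

section \<open>Integral left inverses\<close>

lemma rank_off_obtain_submatrix:
  assumes "rank_off s M \<ge> r"
  obtains I J where "I \<subseteq> {..<s}" "J \<subseteq> {..<s}"
    "vec_space.rank (card I) (submatrix (map_mat rat_of_int M) I J) \<ge> r"
proof -
  let ?S = "{vec_space.rank (card I) (submatrix (map_mat rat_of_int M) I J) | I J.
      I \<subseteq> {..<s} \<and> J \<subseteq> {..<s} \<and> I \<inter> J = {} \<and> card I = card J}"
  have "?S \<subseteq> (\<lambda>(I, J). vec_space.rank (card I) (submatrix (map_mat rat_of_int M) I J)) ` (Pow {..<s} \<times> Pow {..<s})"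
    by auto
  then have "finite ?S" by (rule finite_subset) simp
  moreover have "?S \<noteq> {}" by blast
  ultimately have "Max ?S \<in> ?S" by (rule Max_in)
  moreover have "Max ?S \<ge> r" using assms unfolding rank_off_def .
  ultimately show ?thesis using that by auto
qed

lemma scalar_prod_self_eq_0:
  fixes u :: "'a :: linordered_idom vec"
  assumes u: "u \<in> carrier_vec n" and z: "u \<bullet> u = 0"
  shows "u = 0\<^sub>v n"
proof (rule eq_vecI)
  have "(\<Sum>j\<in>{0..<n}. u $ j * u $ j) = 0" using z u unfolding scalar_prod_def by simp
  then have "\<forall>j\<in>{0..<n}. u $ j * u $ j = 0"
    by (subst sum_nonneg_eq_0_iff[symmetric]) auto
  then show "u $ i = 0\<^sub>v n $ i" if "i < dim_vec (0\<^sub>v n)" for i using that by auto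
qed (use u in simp)

lemma det_gram_nonzero:
  fixes B :: "'a :: linordered_idom mat"
  assumes B: "B \<in> carrier_mat n r" and inj: "\<And>v. v \<in> carrier_vec r \<Longrightarrow> B *\<^sub>v v = 0\<^sub>v n \<Longrightarrow> v = 0\<^sub>v r"
  shows "det (transpose_mat B * B) \<noteq> 0"
proof
  assume "det (transpose_mat B * B) = 0"
  then obtain v where v: "v \<in> carrier_vec r" "v \<noteq> 0\<^sub>v r" "(transpose_mat B * B) *\<^sub>v v = 0\<^sub>v r"
    using det_0_iff_vec_prod_zero[of "transpose_mat B * B" r] B by auto
  define u where "u = B *\<^sub>v v"
  have u: "u \<in> carrier_vec n" unfolding u_def using B v by simp
  have "u \<bullet> u = (transpose_mat B *\<^sub>v u) \<bullet> v"
    using transpose_vec_mult_scalar[OF B v(1) u] unfolding u_def by simp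
  also have "transpose_mat B *\<^sub>v u = 0\<^sub>v r"
    using v(3) B v(1) unfolding u_def by (simp add: assoc_mult_mat_vec[of _ r n B r v])
  finally have "u = 0\<^sub>v n" using scalar_prod_self_eq_0[OF u] v(1) by simp
  then show False using inj[OF v(1)] v(2) unfolding u_def by simp
qed

lemma adj_gram_mult:
  assumes B: "B \<in> carrier_mat n r"
  shows "adj_mat (transpose_mat B * B) * transpose_mat B \<in> carrier_mat r n"
    and "adj_mat (transpose_mat B * B) * transpose_mat B * B = det (transpose_mat B * B) \<cdot>\<^sub>m 1\<^sub>m r"
proof -
  define G where "G = transpose_mat B * B"
  have G: "G \<in> carrier_mat r r" unfolding G_def using B by simp
  show "adj_mat (transpose_mat B * B) * transpose_mat B \<in> carrier_mat r n"
    using adj_mat(1)[OF G] B unfolding G_def by simp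
  have "adj_mat G * transpose_mat B * B = adj_mat G * G"
    using adj_mat(1)[OF G] B unfolding G_def by (simp add: assoc_mult_mat[of _ r r _ n B r])
  also have "\<dots> = det G \<cdot>\<^sub>m 1\<^sub>m r" using adj_mat(3)[OF G] .
  finally show "adj_mat (transpose_mat B * B) * transpose_mat B * B = det (transpose_mat B * B) \<cdot>\<^sub>m 1\<^sub>m r"
    unfolding G_def .
qed

lemma (in vec_space) rank_obtain_independent_columns:
  assumes A: "A \<in> carrier_mat n nc" and rk: "rank A \<ge> r"
  obtains lk where "\<And>k. k < r \<Longrightarrow> lk k < nc"
    and "\<And>v. v \<in> carrier_vec r \<Longrightarrow> mat n r (\<lambda>(i, k). A $$ (i, lk k)) *\<^sub>v v = 0\<^sub>v n \<Longrightarrow> v = 0\<^sub>v r"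
proof -
  obtain S where max: "maximal S (\<lambda>T. T \<subseteq> set (cols A) \<and> lin_indpt T)"
    using maximal_exists[of "\<lambda>T. T \<subseteq> set (cols A) \<and> lin_indpt T" "card (set (cols A))" "{}"]
    by (meson List.finite_set card_mono empty_iff empty_subsetI finite_lin_indpt2 rev_finite_subset)
  have "rank A = card S" by (rule rank_card_indpt[OF A max])
  then have "card S \<ge> r" using rk by simp
  then obtain Sr where Sr: "Sr \<subseteq> S" "card Sr = r" "finite Sr" using obtain_subset_with_card_n by metis
  have S: "S \<subseteq> set (cols A)" "lin_indpt S" using max unfolding maximal_def by auto
  obtain vs where vs: "set vs = Sr" "distinct vs" using finite_distinct_list[OF Sr(3)] by blast
  have len: "length vs = r" using distinct_card[OF vs(2)] vs(1) Sr(2) by simp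
  have "\<exists>l. k < r \<longrightarrow> l < nc \<and> vs ! k = col A l" for k
  proof (cases "k < r")
    case True
    then have "vs ! k \<in> set (cols A)" using len vs(1) Sr(1) S(1) by (metis nth_mem subsetD)
    then show ?thesis using A unfolding cols_def by auto
  qed simp
  then obtain lk where lk: "\<And>k. k < r \<Longrightarrow> lk k < nc \<and> vs ! k = col A (lk k)" by metis
  define Ar where "Ar = mat n r (\<lambda>(i, k). A $$ (i, lk k))"
  have Ar: "Ar \<in> carrier_mat n r" unfolding Ar_def by simp
  have "cols Ar = vs"
  proof (rule nth_equalityI)
    show "length (cols Ar) = length vs" using Ar len by simp
    fix k assume "k < length (cols Ar)"
    then have k: "k < r" using Ar by simp
    show "cols Ar ! k = vs ! k" using lk[OF k] A k unfolding Ar_def by (auto simp: col_def)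
  qed
  then have indpt: "lin_indpt (set (cols Ar))" and dist: "distinct (cols Ar)"
    using subset_li_is_li[OF S(2)] Sr(1) vs by auto
  show ?thesis
  proof
    show "lk k < nc" if "k < r" for k using lk[OF that] by simp
    show "v = 0\<^sub>v r" if "v \<in> carrier_vec r" "mat n r (\<lambda>(i, k). A $$ (i, lk k)) *\<^sub>v v = 0\<^sub>v n" for v
      using lin_depI[OF Ar that(1) _ _ dist] that(2) indpt unfolding Ar_def by blast
  qed
qed

lemma submatrix_rank_obtain_independent_columns:
  assumes M: "M \<in> carrier_mat s s" and I: "I \<subseteq> {..<s}" and J: "J \<subseteq> {..<s}"
    and rk: "vec_space.rank (card I) (submatrix (map_mat rat_of_int M) I J) \<ge> r"
  obtains cs where "\<And>k. k < r \<Longrightarrow> cs k < s"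
    and "\<And>v. v \<in> carrier_vec r \<Longrightarrow> mat s r (\<lambda>(i, k). M $$ (i, cs k)) *\<^sub>v v = 0\<^sub>v s \<Longrightarrow> v = 0\<^sub>v r"
proof -
  define A where "A = submatrix (map_mat rat_of_int M) I J"
  have cI: "card {i. i < s \<and> i \<in> I} = card I" and cJ: "card {j. j < s \<and> j \<in> J} = card J"
    using I J by (metis (no_types, lifting) Collect_cong lessThan_iff subset_iff Collect_mem_eq)+
  have A: "A \<in> carrier_mat (card I) (card J)"
    unfolding A_def using M by (intro carrier_matI) (simp_all add: dim_submatrix cI cJ)
  have pickI: "pick I i < s" if "i < card I" for i using pick_le[of i s I] that cI by simp
  have pickJ: "pick J l < s" if "l < card J" for l using pick_le[of l s J] that cJ by simp
  have Aidx: "A $$ (i, l) = rat_of_int (M $$ (pick I i, pick J l))" if "i < card I" "l < card J" for i l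
    unfolding A_def using that M pickI[OF that(1)] pickJ[OF that(2)]
    by (subst submatrix_index) (simp_all add: cI cJ)
  interpret V: vec_space "TYPE(rat)" "card I" .
  obtain lk where lk: "\<And>k. k < r \<Longrightarrow> lk k < card J"
    and indep: "\<And>v. v \<in> carrier_vec r \<Longrightarrow> mat (card I) r (\<lambda>(i, k). A $$ (i, lk k)) *\<^sub>v v = 0\<^sub>v (card I) \<Longrightarrow> v = 0\<^sub>v r"
    using V.rank_obtain_independent_columns[OF A] rk unfolding A_def by blast
  show ?thesis
  proof
    show "pick J (lk k) < s" if "k < r" for k using pickJ[OF lk[OF that]] .
    fix v :: "int vec" assume v: "v \<in> carrier_vec r"
      and B: "mat s r (\<lambda>(i, k). M $$ (i, pick J (lk k))) *\<^sub>v v = 0\<^sub>v s"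
    have "mat (card I) r (\<lambda>(i, k). A $$ (i, lk k)) *\<^sub>v map_vec rat_of_int v = 0\<^sub>v (card I)"
    proof (rule eq_vecI)
      fix i assume "i < dim_vec (0\<^sub>v (card I) :: rat vec)"
      then have i: "i < card I" by simp
      have "(mat (card I) r (\<lambda>(i, k). A $$ (i, lk k)) *\<^sub>v map_vec rat_of_int v) $ i
          = rat_of_int ((mat s r (\<lambda>(i, k). M $$ (i, pick J (lk k))) *\<^sub>v v) $ pick I i)"
        using i v pickI[OF i] lk by (simp add: scalar_prod_def Aidx)
      then show "(mat (card I) r (\<lambda>(i, k). A $$ (i, lk k)) *\<^sub>v map_vec rat_of_int v) $ i = 0\<^sub>v (card I) $ i"
        using B i pickI[OF i] by simp
    qed simp
    moreover have "map_vec rat_of_int v \<in> carrier_vec r" using v by simp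
    ultimately have v0: "map_vec rat_of_int v = 0\<^sub>v r" using indep by blast
    show "v = 0\<^sub>v r"
    proof (rule eq_vecI)
      fix i assume "i < dim_vec (0\<^sub>v r :: int vec)"
      then show "v $ i = 0\<^sub>v r $ i" using arg_cong[OF v0, of "\<lambda>u. u $ i"] v by simp
    qed (use v in simp)
  qed
qed

lemma rank_off_obtain_scaled_left_inverse:
  assumes M: "M \<in> carrier_mat s s" and rk: "rank_off s M \<ge> r"
  obtains cs w D where "scaled_left_inverse s M r cs w D"
proof -
  obtain I J where I: "I \<subseteq> {..<s}" and J: "J \<subseteq> {..<s}"
    and "vec_space.rank (card I) (submatrix (map_mat rat_of_int M) I J) \<ge> r"
    using rank_off_obtain_submatrix[OF rk] by blast
  then obtain cs where cs: "\<And>k. k < r \<Longrightarrow> cs k < s"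
    and inj: "\<And>v. v \<in> carrier_vec r \<Longrightarrow> mat s r (\<lambda>(i, k). M $$ (i, cs k)) *\<^sub>v v = 0\<^sub>v s \<Longrightarrow> v = 0\<^sub>v r"
    using submatrix_rank_obtain_independent_columns[OF M] by metis
  define B where "B = mat s r (\<lambda>(i, k). M $$ (i, cs k))"
  define W where "W = adj_mat (transpose_mat B * B) * transpose_mat B"
  define D where "D = det (transpose_mat B * B)"
  have B: "B \<in> carrier_mat s r" unfolding B_def by simp
  have W: "W \<in> carrier_mat r s" and WB: "W * B = D \<cdot>\<^sub>m 1\<^sub>m r"
    using adj_gram_mult[OF B] unfolding W_def D_def by auto
  have "(\<Sum>i<s. W $$ (k, i) * M $$ (i, cs k')) = (if k = k' then D else 0)"
    if "k < r" "k' < r" for k k'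
  proof -
    have "(\<Sum>i<s. W $$ (k, i) * M $$ (i, cs k')) = (W * B) $$ (k, k')"
      using W B that unfolding B_def by (simp add: scalar_prod_def atLeast0LessThan)
    then show ?thesis using WB that by simp
  qed
  moreover have "D \<noteq> 0" unfolding D_def by (rule det_gram_nonzero[OF B inj[folded B_def]])
  ultimately have "scaled_left_inverse s M r cs (\<lambda>k i. W $$ (k, i)) D"
    unfolding scaled_left_inverse_def using cs by auto
  then show ?thesis by (rule that)
qed

text \<open>Since r \<ge> 4, Weyl differencing saves a factor P^(r/2) \<ge> P^2 over the trivial bound P^s.\<close>
lemma norm_sum_e_frac_res_class_le:
  assumes inv: "scaled_left_inverse s M r cs w D" and r: "4 \<le> r"
    and P: "P > 0" and m: "m > 0" "m dvd int P" and b: "coprime b (int P)"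
    and symm: "\<And>i j. i < s \<Longrightarrow> j < s \<Longrightarrow> M $$ (i, j) = M $$ (j, i)"
  shows "cmod (\<Sum>x\<in>res_class s P m \<rho>. e_frac P (b * qform s M x))
     \<le> sqrt (real ((2 * r * nat \<bar>2 * m * D\<bar>) ^ r)) * real P ^ (s - 2)"
proof -
  let ?K = "real ((2 * r * nat \<bar>2 * m * D\<bar>) ^ r)"
  have rs: "r \<le> s" by (rule scaled_left_inverse_le[OF inv])
  have "(cmod (\<Sum>x\<in>res_class s P m \<rho>. e_frac P (b * qform s M x)))\<^sup>2
     \<le> real (card (res_class s P m \<rho>)) * real (card {h\<in>box s P. \<forall>i<s. int P dvd 2 * m * mat_app s M h i})"
    by (rule weyl_differencing[OF P m(2) b symm])
  also have "\<dots> \<le> real (P ^ s) * real ((2 * r * nat \<bar>2 * m * D\<bar>) ^ r * P ^ (s - r))"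
  proof (rule mult_mono)
    show "real (card (res_class s P m \<rho>)) \<le> real (P ^ s)"
      using card_res_class_le[of s P m \<rho>] by (simp only: of_nat_le_iff)
    show "real (card {h\<in>box s P. \<forall>i<s. int P dvd 2 * m * mat_app s M h i})
        \<le> real ((2 * r * nat \<bar>2 * m * D\<bar>) ^ r * P ^ (s - r))"
      using card_kernel_mod_le[OF P _ inv, of "2 * m"] m(1) by (simp only: of_nat_le_iff)
  qed simp_all
  also have "\<dots> = ?K * real P ^ (s + (s - r))"
    by (simp only: of_nat_mult of_nat_power power_add mult_ac)
  also have "\<dots> \<le> ?K * real P ^ (2 * (s - 2))"
    using P r rs by (intro mult_left_mono power_increasing) auto
  also have "\<dots> = (sqrt ?K * real P ^ (s - 2))\<^sup>2"
    by (simp add: power_mult_distrib flip: power_mult[of "real P" "s - 2" 2, unfolded mult.commute[of "s - 2"]])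
  finally show ?thesis by (rule power2_le_imp_le) simp
qed

definition mod_invariant :: "nat \<Rightarrow> nat \<Rightarrow> ((nat \<Rightarrow> int) \<Rightarrow> bool) \<Rightarrow> bool" where
  "mod_invariant s m Pr \<longleftrightarrow> (\<forall>x y. (\<forall>j<s. [x j = y j] (mod int m)) \<longrightarrow> Pr x = Pr y)"

lemma mod_invariantD:
  "mod_invariant s m Pr \<Longrightarrow> (\<And>j. j < s \<Longrightarrow> [x j = y j] (mod int m)) \<Longrightarrow> Pr x = Pr y"
  unfolding mod_invariant_def by blast

lemma mod_invariant_dvd:
  assumes "mod_invariant s m Pr" "m dvd Q"
  shows "mod_invariant s Q Pr"
  using assms unfolding mod_invariant_def by (meson cong_dvd_modulus int_dvd_int_iff)

lemma mod_invariant_qform_dvd: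
  assumes "mod_invariant s Q Pr"
  shows "mod_invariant s Q (\<lambda>x. Pr x \<and> int Q dvd qform s M x)"
  using assms qform_cong[of s _ _ "int Q" M] cong_dvd_iff unfolding mod_invariant_def by blast

lemma box_Collect_eq_UN_res_class:
  assumes inv: "mod_invariant s m Pr" and m: "m > 0"
  shows "{x\<in>box s P. Pr x} = (\<Union>\<rho>\<in>{\<rho>\<in>box s m. Pr \<rho>}. res_class s P (int m) \<rho>)"
proof (intro equalityI subsetI)
  fix x assume x: "x \<in> {x\<in>box s P. Pr x}"
  define \<rho> where "\<rho> = restrict (\<lambda>j. x j mod int m) {..<s}"
  have cong: "[x j = \<rho> j] (mod int m)" if "j < s" for j unfolding \<rho>_def using that by (simp add: cong_def)
  have "\<rho> \<in> box s m" unfolding \<rho>_def using m by (intro restrict_in_box) simp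
  moreover have "Pr \<rho>" using x mod_invariantD[OF inv cong] by simp
  moreover have "x \<in> res_class s P (int m) \<rho>" using x cong unfolding res_class_def by simp
  ultimately show "x \<in> (\<Union>\<rho>\<in>{\<rho>\<in>box s m. Pr \<rho>}. res_class s P (int m) \<rho>)" by blast
next
  fix x assume "x \<in> (\<Union>\<rho>\<in>{\<rho>\<in>box s m. Pr \<rho>}. res_class s P (int m) \<rho>)"
  then obtain \<rho> where "Pr \<rho>" and x: "x \<in> box s P" "\<forall>j<s. [x j = \<rho> j] (mod int m)"
    unfolding res_class_def by blast
  then show "x \<in> {x\<in>box s P. Pr x}" using mod_invariantD[OF inv, of x \<rho>] by simp
qed

lemma res_class_disjoint:
  assumes "\<rho> \<in> box s m" "\<rho>' \<in> box s m" "\<rho> \<noteq> \<rho>'"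
  shows "res_class s P (int m) \<rho> \<inter> res_class s P (int m) \<rho>' = {}"
proof (rule ccontr)
  assume "res_class s P (int m) \<rho> \<inter> res_class s P (int m) \<rho>' \<noteq> {}"
  then obtain x where x: "x \<in> res_class s P (int m) \<rho>" "x \<in> res_class s P (int m) \<rho>'" by blast
  have "\<rho> = \<rho>'"
  proof (rule box_eqI[OF assms(1,2)])
    fix j assume j: "j < s"
    have c: "[x j = \<rho> j] (mod int m)" "[x j = \<rho>' j] (mod int m)"
      using x j unfolding res_class_def by auto
    have "[\<rho> j = \<rho>' j] (mod int m)" by (rule cong_trans[OF cong_sym[OF c(1)] c(2)])
    then show "\<rho> j = \<rho>' j" using box_memD[OF assms(1) j] box_memD[OF assms(2) j] by (simp add: cong_def)
  qed
  then show False using assms(3) by simp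
qed

lemma norm_sum_e_frac_mod_invariant_le:
  assumes inv: "scaled_left_inverse s M r cs w D" and r: "4 \<le> r"
    and P: "P > 0" and m: "m > 0" "m dvd P" and b: "coprime b (int P)"
    and symm: "\<And>i j. i < s \<Longrightarrow> j < s \<Longrightarrow> M $$ (i, j) = M $$ (j, i)"
    and Pr: "mod_invariant s m Pr"
  shows "cmod (\<Sum>x\<in>{x\<in>box s P. Pr x}. e_frac P (b * qform s M x))
     \<le> real m ^ s * (sqrt (real ((2 * r * nat \<bar>2 * int m * D\<bar>) ^ r)) * real P ^ (s - 2))"
proof -
  let ?C = "sqrt (real ((2 * r * nat \<bar>2 * int m * D\<bar>) ^ r)) * real P ^ (s - 2)"
  let ?R = "{\<rho>\<in>box s m. Pr \<rho>}"
  have "(\<Sum>x\<in>{x\<in>box s P. Pr x}. e_frac P (b * qform s M x))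
      = (\<Sum>\<rho>\<in>?R. \<Sum>x\<in>res_class s P (int m) \<rho>. e_frac P (b * qform s M x))"
    unfolding box_Collect_eq_UN_res_class[OF Pr m(1), of P]
    by (rule sum.UNION_disjoint) (simp_all add: res_class_disjoint)
  also have "cmod \<dots> \<le> (\<Sum>\<rho>\<in>?R. cmod (\<Sum>x\<in>res_class s P (int m) \<rho>. e_frac P (b * qform s M x)))"
    by (rule norm_sum)
  also have "\<dots> \<le> (\<Sum>\<rho>\<in>?R. ?C)"
    using m by (intro sum_mono norm_sum_e_frac_res_class_le[OF inv r P _ _ b symm]) auto
  also have "\<dots> \<le> real m ^ s * ?C"
  proof -
    have "card ?R \<le> card (box s m)" by (rule card_mono) auto
    then have "card ?R \<le> m ^ s" by (simp add: card_box)
    then show ?thesis by (simp add: mult_right_mono flip: of_nat_power)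
  qed
  finally show ?thesis .
qed

section \<open>Counting zeros modulo prime powers\<close>

lemma restrict_div_in_box:
  assumes x: "x \<in> box s (p * Q)" and Q: "Q > 0"
  shows "restrict (\<lambda>j. x j div int Q) {..<s} \<in> box s p"
proof (rule restrict_in_box)
  fix j assume j: "j < s"
  have b: "0 \<le> x j" "x j < int Q * int p" using box_memD[OF x j] by (auto simp: mult.commute)
  have "int Q * (x j div int Q) \<le> x j"
    using mult_div_mod_eq[of "int Q" "x j"] pos_mod_sign[of "int Q" "x j"] Q by linarith
  then have "int Q * (x j div int Q) < int Q * int p" using b by simp
  then show "0 \<le> x j div int Q \<and> x j div int Q < int p"
    using b Q by (simp add: mult_less_cancel_left pos_imp_zdiv_nonneg_iff)
qed

lemma restrict_add_mult_in_box:
  assumes y: "y \<in> box s Q" and z: "z \<in> box s p"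
  shows "restrict (\<lambda>j. y j + int Q * z j) {..<s} \<in> box s (p * Q)"
proof (rule restrict_in_box)
  fix j assume j: "j < s"
  have "int Q * (z j + 1) \<le> int Q * int p" using box_memD[OF z j] by (intro mult_left_mono) auto
  then show "0 \<le> y j + int Q * z j \<and> y j + int Q * z j < int (p * Q)"
    using box_memD[OF y j] box_memD[OF z j] by (auto simp: algebra_simps)
qed

lemma bij_betw_box_mult:
  assumes Q: "Q > 0" and p: "p > 0"
  shows "bij_betw (\<lambda>x. (restrict (\<lambda>j. x j mod int Q) {..<s}, restrict (\<lambda>j. x j div int Q) {..<s}))
           (box s (p * Q)) (box s Q \<times> box s p)"
proof -
  define \<phi> where "\<phi> = (\<lambda>x :: nat \<Rightarrow> int. (restrict (\<lambda>j. x j mod int Q) {..<s}, restrict (\<lambda>j. x j div int Q) {..<s}))"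
  define \<psi> :: "(nat \<Rightarrow> int) \<times> (nat \<Rightarrow> int) \<Rightarrow> nat \<Rightarrow> int"
    where "\<psi> = (\<lambda>(y, z). restrict (\<lambda>j. y j + int Q * z j) {..<s})"
  have \<phi>: "\<phi> x \<in> box s Q \<times> box s p" if "x \<in> box s (p * Q)" for x
    unfolding \<phi>_def using restrict_div_in_box[OF that Q] Q by (simp add: restrict_in_box)
  have \<psi>: "\<psi> (y, z) \<in> box s (p * Q)" if "y \<in> box s Q" "z \<in> box s p" for y z
    unfolding \<psi>_def using restrict_add_mult_in_box[OF that] by simp
  have "bij_betw \<phi> (box s (p * Q)) (box s Q \<times> box s p)"
  proof (rule bij_betw_byWitness[where f' = \<psi>])
    show "\<forall>x\<in>box s (p * Q). \<psi> (\<phi> x) = x"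
    proof
      fix x assume x: "x \<in> box s (p * Q)"
      have "\<psi> (\<phi> x) \<in> box s (p * Q)" using \<phi>[OF x] \<psi> by (cases "\<phi> x") auto
      then show "\<psi> (\<phi> x) = x" by (rule box_eqI[OF _ x]) (simp add: \<phi>_def \<psi>_def)
    qed
    show "\<forall>yz\<in>box s Q \<times> box s p. \<phi> (\<psi> yz) = yz"
    proof
      fix yz assume "yz \<in> box s Q \<times> box s p"
      then obtain y z where yz: "yz = (y, z)" and y: "y \<in> box s Q" and z: "z \<in> box s p" by blast
      have "restrict (\<lambda>j. \<psi> (y, z) j mod int Q) {..<s} = y"
        by (rule box_eqI[OF restrict_in_box[where Q = Q] y]) (use Q box_memD[OF y] in \<open>simp_all add: \<psi>_def\<close>)
      moreover have "restrict (\<lambda>j. \<psi> (y, z) j div int Q) {..<s} = z"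
        by (rule box_eqI[OF restrict_in_box[where Q = p] z])
          (use Q box_memD[OF y] box_memD[OF z] in \<open>simp_all add: \<psi>_def\<close>)
      ultimately show "\<phi> (\<psi> yz) = yz" unfolding yz \<phi>_def by simp
    qed
    show "\<phi> ` box s (p * Q) \<subseteq> box s Q \<times> box s p" using \<phi> by blast
    show "\<psi> ` (box s Q \<times> box s p) \<subseteq> box s (p * Q)" using \<psi> by blast
  qed
  then show ?thesis unfolding \<phi>_def .
qed

lemma card_box_mult_Collect:
  assumes Pr: "mod_invariant s Q Pr" and Q: "Q > 0" and p: "p > 0"
  shows "card {x\<in>box s (p * Q). Pr x} = p ^ s * card {x\<in>box s Q. Pr x}"
proof -
  have "Pr (restrict (\<lambda>j. x j mod int Q) {..<s}) = Pr x" for x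
    by (rule mod_invariantD[OF Pr]) (simp add: cong_def)
  then have "bij_betw (\<lambda>x. (restrict (\<lambda>j. x j mod int Q) {..<s}, restrict (\<lambda>j. x j div int Q) {..<s}))
      {x\<in>box s (p * Q). Pr x} {yz\<in>box s Q \<times> box s p. Pr (fst yz)}"
    by (intro bij_betw_Collect[OF bij_betw_box_mult[OF Q p]]) simp
  then have "card {x\<in>box s (p * Q). Pr x} = card {yz\<in>box s Q \<times> box s p. Pr (fst yz)}"
    by (rule bij_betw_same_card)
  also have "{yz\<in>box s Q \<times> box s p. Pr (fst yz)} = {y\<in>box s Q. Pr y} \<times> box s p" by auto
  finally show ?thesis by (simp add: card_cartesian_product card_box)
qed

definition count_zeros :: "nat \<Rightarrow> int mat \<Rightarrow> nat \<Rightarrow> ((nat \<Rightarrow> int) \<Rightarrow> bool) \<Rightarrow> nat" where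
  "count_zeros s M Q Pr = card {x\<in>box s Q. Pr x \<and> int Q dvd qform s M x}"

lemma sum_e_frac_multiples:
  assumes "p > 0"
  shows "(\<Sum>b<Q. e_frac Q (int b * t)) = (\<Sum>b\<in>{b\<in>{..<p * Q}. p dvd b}. e_frac (p * Q) (int b * t))"
proof -
  have "(\<lambda>b. p * b) ` {..<Q} = {b\<in>{..<p * Q}. p dvd b}"
  proof (intro equalityI subsetI)
    fix b assume "b \<in> {b\<in>{..<p * Q}. p dvd b}"
    then obtain c where "b = p * c" "p * c < p * Q" by (auto elim: dvdE)
    then show "b \<in> (\<lambda>b. p * b) ` {..<Q}" by simp
  qed (use assms in auto)
  then have "bij_betw (\<lambda>b. p * b) {..<Q} {b\<in>{..<p * Q}. p dvd b}"
    using assms by (simp add: bij_betw_def inj_on_def)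
  then have "(\<Sum>b\<in>{b\<in>{..<p * Q}. p dvd b}. e_frac (p * Q) (int b * t)) = (\<Sum>b<Q. e_frac (p * Q) (int (p * b) * t))"
    by (rule sum.reindex_bij_betw[symmetric])
  also have "\<dots> = (\<Sum>b<Q. e_frac Q (int b * t))"
    using e_frac_mult_mult[OF assms] by (simp add: mult.assoc)
  finally show ?thesis ..
qed

lemma sum_e_frac_multiples_eq_count_zeros:
  assumes p0: "p > 0" and Q: "Q > 0" and Pr: "mod_invariant s Q Pr"
  shows "(\<Sum>b\<in>{b\<in>{..<p * Q}. p dvd b}. \<Sum>x\<in>{x\<in>box s (p * Q). Pr x}. e_frac (p * Q) (int b * qform s M x))
    = of_nat (p ^ s * count_zeros s M Q Pr) * of_nat Q"
proof -
  let ?f = "qform s M"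
  let ?U = "{x\<in>box s (p * Q). Pr x}"
  let ?B = "{b\<in>{..<p * Q}. p dvd b}"
  have "(\<Sum>b\<in>?B. \<Sum>x\<in>?U. e_frac (p * Q) (int b * ?f x)) = (\<Sum>x\<in>?U. \<Sum>b\<in>?B. e_frac (p * Q) (int b * ?f x))"
    by (rule sum.swap)
  also have "\<dots> = (\<Sum>x\<in>?U. \<Sum>b<Q. e_frac Q (int b * ?f x))"
    by (simp only: sum_e_frac_multiples[OF p0])
  also have "\<dots> = (\<Sum>b<Q. \<Sum>x\<in>?U. e_frac Q (int b * ?f x))"
    by (rule sum.swap)
  also have "\<dots> = of_nat (card {x\<in>?U. int Q dvd ?f x}) * of_nat Q"
    by (rule card_dvd_eq_sum_e_frac[symmetric]) (simp_all add: Q)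
  also have "{x\<in>?U. int Q dvd ?f x} = {x\<in>box s (p * Q). Pr x \<and> int Q dvd ?f x}" by blast
  also have "card \<dots> = p ^ s * count_zeros s M Q Pr"
    unfolding count_zeros_def by (rule card_box_mult_Collect[OF mod_invariant_qform_dvd[OF Pr] Q p0])
  finally show ?thesis .
qed

text \<open>Characters with p | b reproduce the count modulo Q; the others are bounded by Bd.\<close>
lemma count_zeros_recursion:
  fixes Bd :: real
  assumes p: "prime p" and Q: "Q > 0" and Pr: "mod_invariant s Q Pr"
    and bnd: "\<And>b. coprime b (int p) \<Longrightarrow>
      cmod (\<Sum>x\<in>{x\<in>box s (p * Q). Pr x}. e_frac (p * Q) (b * qform s M x)) \<le> Bd"
  shows "\<bar>real (count_zeros s M (p * Q) Pr) * real (p * Q)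
           - real p ^ s * real (count_zeros s M Q Pr) * real Q\<bar> \<le> real (p * Q) * Bd"
proof -
  let ?f = "qform s M"
  let ?U = "{x\<in>box s (p * Q). Pr x}"
  let ?T = "\<lambda>b. \<Sum>x\<in>?U. e_frac (p * Q) (int b * ?f x)"
  let ?B = "{b\<in>{..<p * Q}. p dvd b}"
  define R where "R = (\<Sum>b\<in>{..<p * Q} - ?B. ?T b)"
  have p0: "p > 0" using p by (simp add: prime_gt_0_nat)
  have "{x\<in>?U. int (p * Q) dvd ?f x} = {x\<in>box s (p * Q). Pr x \<and> int (p * Q) dvd ?f x}" by blast
  then have "of_nat (count_zeros s M (p * Q) Pr) * of_nat (p * Q) = (\<Sum>b<p * Q. ?T b)"
    unfolding count_zeros_def using card_dvd_eq_sum_e_frac[of ?U "p * Q" ?f] p0 Q by simp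
  also have "\<dots> = R + (\<Sum>b\<in>?B. ?T b)"
    unfolding R_def by (rule sum.subset_diff) auto
  also have "(\<Sum>b\<in>?B. ?T b) = of_nat (p ^ s * count_zeros s M Q Pr) * of_nat Q"
    by (rule sum_e_frac_multiples_eq_count_zeros[OF p0 Q Pr])
  finally have "R = complex_of_real (real (count_zeros s M (p * Q) Pr) * real (p * Q)
      - real p ^ s * real (count_zeros s M Q Pr) * real Q)"
    by (simp add: algebra_simps)
  then have "\<bar>real (count_zeros s M (p * Q) Pr) * real (p * Q)
      - real p ^ s * real (count_zeros s M Q Pr) * real Q\<bar> = cmod R"
    by (simp only: norm_of_real)
  also have "\<dots> \<le> (\<Sum>b\<in>{..<p * Q} - ?B. cmod (?T b))" unfolding R_def by (rule norm_sum)
  also have "\<dots> \<le> (\<Sum>b\<in>{..<p * Q} - ?B. Bd)"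
  proof (rule sum_mono)
    fix b assume "b \<in> {..<p * Q} - ?B"
    then have "\<not> p dvd b" by simp
    then have "coprime p b" by (rule prime_imp_coprime[OF p])
    then have "coprime (int b) (int p)" by (simp add: coprime_commute)
    then show "cmod (?T b) \<le> Bd" by (rule bnd)
  qed
  also have "\<dots> \<le> real (p * Q) * Bd"
  proof -
    have "cmod (\<Sum>x\<in>?U. e_frac (p * Q) (1 * ?f x)) \<le> Bd" by (rule bnd) simp
    then have "0 \<le> Bd" by (rule order_trans[OF norm_ge_zero])
    moreover have "card ({..<p * Q} - ?B) \<le> card {..<p * Q}" by (rule card_mono) auto
    then have "real (card ({..<p * Q} - ?B)) \<le> real (p * Q)" by (simp only: of_nat_le_iff card_lessThan)
    ultimately show ?thesis using mult_right_mono by simp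
  qed
  finally show ?thesis .
qed

lemma convergent_if_geometric_increments:
  fixes u :: "nat \<Rightarrow> real"
  assumes inc: "\<And>n. n \<ge> 1 \<Longrightarrow> \<bar>u (Suc n) - u n\<bar> \<le> C * q ^ n" and q: "0 \<le> q" "q < 1"
  shows "convergent u"
proof -
  have "summable (\<lambda>n. C * q ^ n)" using q by (simp add: summable_geometric)
  then have "summable (\<lambda>n. u (Suc n) - u n)"
    by (rule summable_comparison_test'[where N = 1]) (use inc in simp)
  then have "convergent (\<lambda>n. \<Sum>k<n. u (Suc k) - u k)" by (simp add: summable_iff_convergent)
  then have "convergent (\<lambda>n. u n - u 0 + u 0)"
    unfolding sum_lessThan_telescope by (intro convergent_add convergent_const)
  then show ?thesis by simp
qed

lemma normalized_increment_le:
  fixes a A A' C :: real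
  assumes a: "a > 0" and s: "s \<ge> 1"
    and rec: "\<bar>A' * a ^ Suc k - a ^ s * A * a ^ k\<bar> \<le> C * a ^ (Suc k * (s - 1))"
  shows "\<bar>A' / a ^ (Suc k * (s - 1)) - A / a ^ (k * (s - 1))\<bar> \<le> C / a * (1 / a) ^ k"
proof -
  obtain t where t: "s = Suc t" using s by (cases s) auto
  have e1: "a ^ (Suc k * s) = a ^ (Suc k * t) * a ^ Suc k"
    by (simp only: t power_add[symmetric]) (simp add: algebra_simps)
  have e2: "a ^ s * a ^ k * a ^ (k * t) = a ^ (Suc k * s)"
    by (simp only: t power_add[symmetric]) (simp add: algebra_simps)
  have st: "s - 1 = t" using t by simp
  have eq1: "A' * a ^ Suc k / a ^ (Suc k * s) = A' / a ^ (Suc k * t)"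
    unfolding e1 using a by simp
  have eq2: "a ^ s * A * a ^ k / a ^ (Suc k * s) = A / a ^ (k * t)"
    unfolding e2[symmetric] using a by (simp add: field_simps)
  have "\<bar>A' / a ^ (Suc k * (s - 1)) - A / a ^ (k * (s - 1))\<bar>
      = \<bar>(A' * a ^ Suc k - a ^ s * A * a ^ k) / a ^ (Suc k * s)\<bar>"
    unfolding st by (simp only: diff_divide_distrib eq1 eq2)
  also have "\<dots> = \<bar>A' * a ^ Suc k - a ^ s * A * a ^ k\<bar> / a ^ (Suc k * s)"
    using a by (simp only: abs_divide abs_of_pos zero_less_power)
  also have "\<dots> \<le> C * a ^ (Suc k * t) / a ^ (Suc k * s)"
    using rec a unfolding st by (intro divide_right_mono) auto
  also have "\<dots> = C / a * (1 / a) ^ k"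
    unfolding e1 using a by (simp add: field_simps power_one_over)
  finally show ?thesis .
qed

lemma convergent_count_zeros:
  assumes p: "prime p" and inv: "scaled_left_inverse s M r cs w D" and r: "4 \<le> r"
    and symm: "\<And>i j. i < s \<Longrightarrow> j < s \<Longrightarrow> M $$ (i, j) = M $$ (j, i)"
    and Pr: "mod_invariant s p Pr"
  shows "convergent (\<lambda>k. real (count_zeros s M (p ^ k) Pr) / real p ^ (k * (s - 1)))"
proof (rule convergent_if_geometric_increments)
  define C where "C = real p ^ s * sqrt (real ((2 * r * nat \<bar>2 * int p * D\<bar>) ^ r))"
  have p0: "p > 0" using p by (simp add: prime_gt_0_nat)
  have s: "s \<ge> 2" using scaled_left_inverse_le[OF inv] r by simp
  fix k :: nat assume k: "k \<ge> 1"
  have "\<bar>real (count_zeros s M (p * p ^ k) Pr) * real (p * p ^ k)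
      - real p ^ s * real (count_zeros s M (p ^ k) Pr) * real (p ^ k)\<bar>
      \<le> real (p * p ^ k) * (C * real (p * p ^ k) ^ (s - 2))"
  proof (rule count_zeros_recursion[OF p _ mod_invariant_dvd[OF Pr]])
    fix b :: int assume "coprime b (int p)"
    then have cb: "coprime b (int (p * p ^ k))" by (simp add: coprime_power_right_iff)
    have "cmod (\<Sum>x\<in>{x\<in>box s (p * p ^ k). Pr x}. e_frac (p * p ^ k) (b * qform s M x))
        \<le> real p ^ s * (sqrt (real ((2 * r * nat \<bar>2 * int p * D\<bar>) ^ r)) * real (p * p ^ k) ^ (s - 2))"
      by (rule norm_sum_e_frac_mod_invariant_le[OF inv r _ p0 _ cb symm Pr]) (use p0 in simp_all)
    then show "cmod (\<Sum>x\<in>{x\<in>box s (p * p ^ k). Pr x}. e_frac (p * p ^ k) (b * qform s M x))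
        \<le> C * real (p * p ^ k) ^ (s - 2)"
      by (simp only: C_def mult.assoc)
  qed (use p0 k in simp_all)
  also have "real (p * p ^ k) * (C * real (p * p ^ k) ^ (s - 2)) = C * real p ^ (Suc k * (s - 1))"
  proof -
    have e: "real (p * p ^ k) = real p ^ Suc k" and s1: "Suc (s - 2) = s - 1" using s by simp_all
    have "real (p * p ^ k) * (C * real (p * p ^ k) ^ (s - 2)) = C * real (p * p ^ k) ^ Suc (s - 2)"
      by (simp only: power_Suc ac_simps)
    also have "\<dots> = C * real p ^ (Suc k * (s - 1))" by (simp only: e s1 power_mult)
    finally show ?thesis .
  qed
  finally show "\<bar>real (count_zeros s M (p ^ Suc k) Pr) / real p ^ (Suc k * (s - 1))
      - real (count_zeros s M (p ^ k) Pr) / real p ^ (k * (s - 1))\<bar> \<le> C / real p * (1 / real p) ^ k"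
    by (intro normalized_increment_le) (use p0 s in simp_all)
qed (use prime_gt_1_nat[OF p] in simp_all)

lemma bij_betw_Icc_box:
  assumes Q: "Q > 0"
  shows "bij_betw (\<lambda>x. restrict (\<lambda>j. x j mod int Q) {..<s}) ({..<s} \<rightarrow>\<^sub>E {1..int Q}) (box s Q)"
proof -
  define \<phi> where "\<phi> = (\<lambda>x :: nat \<Rightarrow> int. restrict (\<lambda>j. x j mod int Q) {..<s})"
  define \<psi> where "\<psi> = (\<lambda>y :: nat \<Rightarrow> int. restrict (\<lambda>j. if y j = 0 then int Q else y j) {..<s})"
  have \<phi>: "\<phi> x \<in> box s Q" for x unfolding \<phi>_def using Q by (intro restrict_in_box) simp
  have \<psi>: "\<psi> y \<in> {..<s} \<rightarrow>\<^sub>E {1..int Q}" if y: "y \<in> box s Q" for y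
  proof -
    have "(if y j = 0 then int Q else y j) \<in> {1..int Q}" if "j < s" for j
      using box_memD[OF y that] Q by auto
    then show ?thesis unfolding \<psi>_def by (simp add: restrict_PiE_iff)
  qed
  have "bij_betw \<phi> ({..<s} \<rightarrow>\<^sub>E {1..int Q}) (box s Q)"
  proof (rule bij_betw_byWitness[where f' = \<psi>])
    show "\<forall>x\<in>{..<s} \<rightarrow>\<^sub>E {1..int Q}. \<psi> (\<phi> x) = x"
    proof
      fix x assume x: "x \<in> {..<s} \<rightarrow>\<^sub>E {1..int Q}"
      show "\<psi> (\<phi> x) = x"
      proof
        fix j show "\<psi> (\<phi> x) j = x j"
        proof (cases "j < s")
          case True
          then have "1 \<le> x j" "x j \<le> int Q" using PiE_mem[OF x, of j] by simp_all
          then show ?thesis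
            using True unfolding \<phi>_def \<psi>_def by (cases "x j = int Q") (simp_all add: zmod_trivial_iff)
        next
          case False
          then show ?thesis using PiE_arb[OF x, of j] unfolding \<psi>_def by simp
        qed
      qed
    qed
    show "\<forall>y\<in>box s Q. \<phi> (\<psi> y) = y"
    proof
      fix y assume y: "y \<in> box s Q"
      show "\<phi> (\<psi> y) = y"
        by (rule box_eqI[OF \<phi> y]) (use Q box_memD[OF y] in \<open>simp add: \<phi>_def \<psi>_def\<close>)
    qed
    show "\<phi> ` ({..<s} \<rightarrow>\<^sub>E {1..int Q}) \<subseteq> box s Q" using \<phi> by blast
    show "\<psi> ` box s Q \<subseteq> {..<s} \<rightarrow>\<^sub>E {1..int Q}" using \<psi> by blast
  qed
  then show ?thesis unfolding \<phi>_def .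
qed

lemma card_Icc_Collect_eq_box:
  assumes Q: "Q > 0" and Pr: "mod_invariant s Q Pr"
  shows "card {x\<in>{..<s} \<rightarrow>\<^sub>E {1..int Q}. Pr x} = card {x\<in>box s Q. Pr x}"
proof -
  have "Pr (restrict (\<lambda>j. x j mod int Q) {..<s}) = Pr x" for x
    by (rule mod_invariantD[OF Pr]) (simp add: cong_def)
  then have "bij_betw (\<lambda>x. restrict (\<lambda>j. x j mod int Q) {..<s})
      {x\<in>{..<s} \<rightarrow>\<^sub>E {1..int Q}. Pr x} {x\<in>box s Q. Pr x}"
    by (intro bij_betw_Collect[OF bij_betw_Icc_box[OF Q]])
  then show ?thesis by (rule bij_betw_same_card)
qed

definition coprime_vec :: "nat \<Rightarrow> nat \<Rightarrow> (nat \<Rightarrow> int) \<Rightarrow> bool" where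
  "coprime_vec s p x \<longleftrightarrow> (\<forall>j<s. coprime (x j) (int p))"

lemma mod_invariant_True: "mod_invariant s m (\<lambda>_. True)"
  unfolding mod_invariant_def by simp

lemma mod_invariant_coprime_vec: "mod_invariant s p (coprime_vec s p)"
  unfolding mod_invariant_def coprime_vec_def by (meson cong_imp_coprime cong_sym)

lemma count_sol_eq_count_zeros:
  assumes "p > 0"
  shows "count_sol s M p k = count_zeros s M (p ^ k) (\<lambda>_. True)"
  using card_Icc_Collect_eq_box[OF _ mod_invariant_qform_dvd[OF mod_invariant_True], of "p ^ k" s M] assms
  unfolding count_sol_def count_zeros_def by (simp add: cong_0_iff)

lemma count_sol_star_eq_count_zeros:
  assumes "p > 0" "k \<ge> 1"
  shows "count_sol_star s M p k = count_zeros s M (p ^ k) (coprime_vec s p)"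
proof -
  have "mod_invariant s (p ^ k) (coprime_vec s p)"
    using mod_invariant_dvd[OF mod_invariant_coprime_vec] assms(2) by (simp add: dvd_power)
  then show ?thesis
    using card_Icc_Collect_eq_box[OF _ mod_invariant_qform_dvd, of "p ^ k" s "coprime_vec s p" M] assms(1)
    unfolding count_sol_star_def count_zeros_def coprime_vec_def by (simp add: cong_0_iff)
qed

lemma coprime_one_plus_mult: "coprime (1 + a * b) (a :: int)"
proof -
  have "gcd a (b * a + 1) = gcd a 1" by (rule gcd_add_mult)
  then show ?thesis by (simp add: coprime_iff_gcd_eq_1 gcd.commute mult.commute add.commute)
qed

lemma one_plus_mult_in_box:
  assumes y: "y \<in> box s (p * Q)" and p: "1 < p"
  shows "restrict (\<lambda>j. 1 + int p * y j) {..<s} \<in> box s (p * (p * Q))"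
proof (rule restrict_in_box)
  fix j assume j: "j < s"
  have "int p * (y j + 1) \<le> int p * int (p * Q)" using box_memD[OF y j] by (intro mult_left_mono) auto
  then show "0 \<le> 1 + int p * y j \<and> 1 + int p * y j < int (p * (p * Q))"
    using box_memD[OF y j] p by (simp add: algebra_simps)
qed

lemma count_zeros_lift:
  assumes symm: "\<And>i j. i < s \<Longrightarrow> j < s \<Longrightarrow> M $$ (i, j) = M $$ (j, i)"
    and ti: "translation_invariant s M" and p: "1 < p"
  shows "p ^ s * count_zeros s M (p ^ k) (\<lambda>_. True) \<le> count_zeros s M (p ^ (k + 2)) (coprime_vec s p)"
proof -
  let ?f = "qform s M"
  let ?A = "{y\<in>box s (p * p ^ k). int (p ^ k) dvd ?f y}"
  define \<iota> where "\<iota> = (\<lambda>y :: nat \<Rightarrow> int. restrict (\<lambda>j. 1 + int p * y j) {..<s})"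
  have p0: "p > 0" using p by simp
  have "mod_invariant s (p ^ k) (\<lambda>x. True \<and> int (p ^ k) dvd ?f x)"
    by (rule mod_invariant_qform_dvd[OF mod_invariant_True])
  from card_box_mult_Collect[OF this _ p0]
  have cardA: "card ?A = p ^ s * count_zeros s M (p ^ k) (\<lambda>_. True)"
    unfolding count_zeros_def using p0 by simp
  have inj: "inj_on \<iota> ?A"
  proof
    fix y y' assume y: "y \<in> ?A" and y': "y' \<in> ?A" and e: "\<iota> y = \<iota> y'"
    show "y = y'"
    proof (rule box_eqI)
      show "y \<in> box s (p * p ^ k)" "y' \<in> box s (p * p ^ k)" using y y' by simp_all
      fix j assume "j < s"
      then have "1 + int p * y j = 1 + int p * y' j" using fun_cong[OF e, of j] unfolding \<iota>_def by simp
      then show "y j = y' j" using p by simp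
    qed
  qed
  have img: "\<iota> ` ?A \<subseteq> {x\<in>box s (p ^ (k + 2)). coprime_vec s p x \<and> int (p ^ (k + 2)) dvd ?f x}"
  proof (rule image_subsetI)
    fix y assume y: "y \<in> ?A"
    have "p ^ (k + 2) = p * (p * p ^ k)" by (simp add: power_add power2_eq_square)
    then have "\<iota> y \<in> box s (p ^ (k + 2))"
      unfolding \<iota>_def using one_plus_mult_in_box[OF _ p, of y s "p ^ k"] y by simp
    moreover have "coprime_vec s p (\<iota> y)"
      unfolding coprime_vec_def \<iota>_def by (simp add: coprime_one_plus_mult)
    moreover have "int (p ^ (k + 2)) dvd ?f (\<iota> y)"
    proof -
      have fq: "?f (\<iota> y) = int p ^ 2 * ?f y"
        unfolding \<iota>_def qform_restrict by (rule qform_one_plus_mult[OF symm ti])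
      have ep: "int (p ^ (k + 2)) = int p ^ 2 * int (p ^ k)" by (simp add: power_add power2_eq_square)
      have "int (p ^ k) dvd ?f y" using y by simp
      then show ?thesis unfolding fq ep by (rule mult_dvd_mono[OF dvd_refl])
    qed
    ultimately show "\<iota> y \<in> {x\<in>box s (p ^ (k + 2)). coprime_vec s p x \<and> int (p ^ (k + 2)) dvd ?f x}" by simp
  qed
  have "card ?A \<le> card {x\<in>box s (p ^ (k + 2)). coprime_vec s p x \<and> int (p ^ (k + 2)) dvd ?f x}"
    by (rule card_inj_on_le[OF inj img]) simp
  then show ?thesis unfolding cardA count_zeros_def .
qed

lemma sigma_p_limit:
  assumes "p > 0" and "convergent (\<lambda>k. real (count_zeros s M (p ^ k) (\<lambda>_. True)) / real p ^ (k * (s - 1)))"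
  shows "(\<lambda>k. real (count_zeros s M (p ^ k) (\<lambda>_. True)) / real p ^ (k * (s - 1))) \<longlonglongrightarrow> sigma_p s M p"
  using assms(2) unfolding sigma_p_def count_sol_eq_count_zeros[OF assms(1)]
  by (simp add: convergent_LIMSEQ_iff)

lemma totient_normalization:
  fixes a f N :: real
  assumes a: "a > 0" and f: "f > 0"
  shows "a ^ Suc j / (a ^ j * f) ^ Suc t * N = (a / f) ^ Suc t * (N / a ^ (Suc j * t))"
proof -
  have "Suc j + Suc j * t = Suc t + j * Suc t" by simp
  then have ex: "a ^ Suc j * a ^ (Suc j * t) = a ^ Suc t * (a ^ j) ^ Suc t"
    by (simp only: power_add[symmetric] power_mult[symmetric])
  have "a ^ Suc j / (a ^ j * f) ^ Suc t * N = a ^ Suc j * a ^ (Suc j * t) * N / ((a ^ j) ^ Suc t * f ^ Suc t * a ^ (Suc j * t))"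
    using a by (simp add: power_mult_distrib)
  also have "\<dots> = (a / f) ^ Suc t * (N / a ^ (Suc j * t))"
    unfolding ex using a f by (simp add: power_divide)
  finally show ?thesis .
qed

lemma sigma_p_star_eq:
  assumes p: "prime p" and s: "s \<ge> 1"
    and lim: "(\<lambda>k. real (count_zeros s M (p ^ k) (coprime_vec s p)) / real p ^ (k * (s - 1))) \<longlonglongrightarrow> L"
  shows "sigma_p_star s M p = (real p / real (totient p)) ^ s * L"
proof -
  have p0: "p > 0" using p by (simp add: prime_gt_0_nat)
  have f: "real (totient p) > 0" using p by (simp add: prime_gt_0_nat)
  obtain t where t: "s = Suc t" using s by (cases s) auto
  have "real p ^ k / real (totient (p ^ k)) ^ s * real (count_sol_star s M p k)
      = (real p / real (totient p)) ^ s * (real (count_zeros s M (p ^ k) (coprime_vec s p)) / real p ^ (k * (s - 1)))"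
    if k: "k \<ge> 1" for k
  proof -
    obtain j where j: "k = Suc j" using k by (cases k) auto
    have "totient (p ^ k) = p ^ j * totient p"
      unfolding j totient_prime_power_Suc[OF p] totient_prime[OF p] ..
    then have tot: "real (totient (p ^ k)) = real p ^ j * real (totient p)" by simp
    show ?thesis
      unfolding count_sol_star_eq_count_zeros[OF p0 k] tot unfolding j t diff_Suc_1
      by (rule totient_normalization[OF _ f]) (use p0 in simp)
  qed
  then have "\<forall>\<^sub>F k in sequentially. (real p / real (totient p)) ^ s *
      (real (count_zeros s M (p ^ k) (coprime_vec s p)) / real p ^ (k * (s - 1)))
      = real p ^ k / real (totient (p ^ k)) ^ s * real (count_sol_star s M p k)"
    unfolding eventually_sequentially by (metis (no_types, lifting))
  with tendsto_mult_left[OF lim] have "(\<lambda>k. real p ^ k / real (totient (p ^ k)) ^ s * real (count_sol_star s M p k))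
      \<longlonglongrightarrow> (real p / real (totient p)) ^ s * L"
    by (rule Lim_transform_eventually)
  then show ?thesis unfolding sigma_p_star_def by (rule limI)
qed

lemma normalized_lift_le:
  assumes p: "p > 0" and s: "s \<ge> 1" and le: "p ^ s * N \<le> N'"
  shows "real p ^ 2 / real p ^ s * (real N / real p ^ (k * (s - 1)))
    \<le> real N' / real p ^ ((k + 2) * (s - 1))"
proof -
  obtain t where t: "s = Suc t" using s by (cases s) auto
  have "2 + (k + 2) * (s - 1) = s + s + k * (s - 1)" unfolding t by simp
  then have "real p ^ 2 * real p ^ ((k + 2) * (s - 1)) = real p ^ s * real p ^ s * real p ^ (k * (s - 1))"
    by (simp only: power_add[symmetric])
  then have "real p ^ 2 / real p ^ s * (real N / real p ^ (k * (s - 1)))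
      = real (p ^ s * N) / real p ^ ((k + 2) * (s - 1))"
    using p by (simp add: field_simps)
  also have "\<dots> \<le> real N' / real p ^ ((k + 2) * (s - 1))"
    using le by (intro divide_right_mono) (simp_all only: of_nat_le_iff zero_le_power of_nat_0_le_iff)
  finally show ?thesis .
qed

theorem lemma2p6:
  fixes s :: nat and M :: "int mat" and p :: nat
  assumes "M \<in> carrier_mat s s"
    and "transpose_mat M = M"
    and "translation_invariant s M"
    and "rank_off s M \<ge> 5"
    and "prime p"
  shows "sigma_p_star s M p \<ge> real p ^ 2 / real (totient p) ^ s * sigma_p s M p"
proof -
  have symm: "M $$ (i, j) = M $$ (j, i)" if "i < s" "j < s" for i j
    using assms(1,2) that by (metis carrier_matD(1,2) index_transpose_mat(1))
  obtain cs w D where inv: "scaled_left_inverse s M 5 cs w D"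
    using rank_off_obtain_scaled_left_inverse[OF assms(1,4)] .
  have p0: "p > 0" and p1: "1 < p"
    using prime_gt_0_nat[OF assms(5)] prime_gt_1_nat[OF assms(5)] by simp_all
  have s: "s \<ge> 1" using scaled_left_inverse_le[OF inv] by simp
  define u where "u k = real (count_zeros s M (p ^ k) (\<lambda>_. True)) / real p ^ (k * (s - 1))" for k
  define v where "v k = real (count_zeros s M (p ^ k) (coprime_vec s p)) / real p ^ (k * (s - 1))" for k
  have u: "u \<longlonglongrightarrow> sigma_p s M p"
    unfolding u_def using convergent_count_zeros[OF assms(5) inv _ symm mod_invariant_True]
    by (intro sigma_p_limit p0) simp
  obtain L where v: "v \<longlonglongrightarrow> L"
    using convergent_count_zeros[OF assms(5) inv _ symm mod_invariant_coprime_vec]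
    unfolding v_def convergent_def by auto
  have "real p ^ 2 / real p ^ s * u k \<le> v (k + 2)" for k
    unfolding u_def v_def by (rule normalized_lift_le[OF p0 s count_zeros_lift[OF symm assms(3) p1]])
  then have "real p ^ 2 / real p ^ s * sigma_p s M p \<le> L"
    by (intro LIMSEQ_le[OF tendsto_mult_left[OF u] LIMSEQ_ignore_initial_segment[OF v, of 2]]) auto
  then have "(real p / real (totient p)) ^ s * (real p ^ 2 / real p ^ s * sigma_p s M p) \<le> sigma_p_star s M p"
    unfolding sigma_p_star_eq[OF assms(5) s v[unfolded v_def]] by (intro mult_left_mono) simp_all
  then show ?thesis using p0 by (simp add: power_divide)
qed

end
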